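(* For every $n>1$, the structure $\mathcal{M}_n$ does not eliminate finite imaginaries.
   Context: For $n\geq1$, $\mathcal{M}_n$ is the two-sorted structure with sort $P=\mathbb{C}$ carrying the full field structure $(\mathbb{C},+,\cdot)$, sort $S=\mathbb{C}\times\mathbb{C}$, the projection $\pi:S\to P$, $(\alpha,a')\mapsto\alpha$, the addition $\oplus$ on $S$, $((\alpha,a'),(\beta,b'))\mapsto(\alpha+\beta,a'+b')$, the action $\star$ of $P$ on $S$, $\beta\star(\alpha,a')=(\alpha,a'+\beta)$, and the $(n+1)$-ary relation $R_n$ on $S$: $R_n((\alpha_1,a_1'),\ldots,(\alpha_{n+1},a_{n+1}'))$ holds iff $\alpha_i=\alpha_1^i$ for all $i\leq n+1$ and $a_{n+1}'=\sum_{i=1}^{n}\binom{n+1}{i}(-1)^{n-i}\alpha_{n+1-i}a_i'$. A structure eliminates finite imaginaries if every finite set of real tuples has a real canonical parameter, i.e. is coded by a tuple of elements of the real sorts (here $S$ and $P$). *)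

theory Defs
  imports Complex_Main
begin

datatype ptm = PV nat | PZero | POne | PPlus ptm ptm | PTimes ptm ptm | PUminus ptm
  | Proj stm
and stm = SV nat | SPlus stm stm | Act ptm stm

datatype fm = EqP ptm ptm | EqS stm stm | Rel "stm list" | FNot fm | FAnd fm fm
  | ExistsP nat fm | ExistsS nat fm

primrec evp :: "(nat \<Rightarrow> complex) \<Rightarrow> (nat \<Rightarrow> complex \<times> complex) \<Rightarrow> ptm \<Rightarrow> complex"
  and evs :: "(nat \<Rightarrow> complex) \<Rightarrow> (nat \<Rightarrow> complex \<times> complex) \<Rightarrow> stm \<Rightarrow> complex \<times> complex"
where
  "evp ep es (PV i) = ep i"
| "evp ep es PZero = 0"
| "evp ep es POne = 1"
| "evp ep es (PPlus t u) = evp ep es t + evp ep es u"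
| "evp ep es (PTimes t u) = evp ep es t * evp ep es u"
| "evp ep es (PUminus t) = - evp ep es t"
| "evp ep es (Proj s) = fst (evs ep es s)"
| "evs ep es (SV i) = es i"
| "evs ep es (SPlus s t) = (fst (evs ep es s) + fst (evs ep es t), snd (evs ep es s) + snd (evs ep es t))"
| "evs ep es (Act b s) = (fst (evs ep es s), snd (evs ep es s) + evp ep es b)"

text \<open>The relation R_n on S^(n+1); the list index i-1 holds the i-th argument.\<close>
definition Rn :: "nat \<Rightarrow> (complex \<times> complex) list \<Rightarrow> bool" where
  "Rn n xs \<longleftrightarrow> length xs = Suc n
     \<and> (\<forall>i\<in>{1..Suc n}. fst (xs ! (i - 1)) = fst (xs ! 0) ^ i)
     \<and> snd (xs ! n) = (\<Sum>i=1..n. of_nat (Suc n choose i) * (-1) ^ (n - i)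
                                   * fst (xs ! (n - i)) * snd (xs ! (i - 1)))"

primrec sat :: "nat \<Rightarrow> (nat \<Rightarrow> complex) \<Rightarrow> (nat \<Rightarrow> complex \<times> complex) \<Rightarrow> fm \<Rightarrow> bool" where
  "sat n ep es (EqP t u) = (evp ep es t = evp ep es u)"
| "sat n ep es (EqS s t) = (evs ep es s = evs ep es t)"
| "sat n ep es (Rel ss) = Rn n (map (evs ep es) ss)"
| "sat n ep es (FNot \<phi>) = (\<not> sat n ep es \<phi>)"
| "sat n ep es (FAnd \<phi> \<psi>) = (sat n ep es \<phi> \<and> sat n ep es \<psi>)"
| "sat n ep es (ExistsP v \<phi>) = (\<exists>z. sat n (ep(v := z)) es \<phi>)"
| "sat n ep es (ExistsS v \<phi>) = (\<exists>z. sat n ep (es(v := z)) \<phi>)"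

text \<open>Assignment from a list; variables beyond the list get a fixed default
  (0 in P, (0,0) in S; both are 0-definable, so this is harmless).\<close>
definition lenv :: "'a \<Rightarrow> 'a list \<Rightarrow> nat \<Rightarrow> 'a" where
  "lenv d zs i = (if i < length zs then zs ! i else d)"

text \<open>A real tuple = (P-components, S-components). Formula phi defines, with parameter
  tuple c = (cp, cs), the set of tuples (a, b): P-variables 0..k-1 are a, then cp;
  S-variables 0..l-1 are b, then cs.\<close>
definition defines_with :: "nat \<Rightarrow> nat \<Rightarrow> nat \<Rightarrow> fm \<Rightarrow> complex list \<Rightarrow> (complex \<times> complex) list
    \<Rightarrow> (complex list \<times> (complex \<times> complex) list) set \<Rightarrow> bool" where
  "defines_with n k l \<phi> cp cs F \<longleftrightarrow>
     (\<forall>a b. length a = k \<and> length b = l \<longrightarrow>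
        ((a, b) \<in> F \<longleftrightarrow> sat n (lenv 0 (a @ cp)) (lenv (0, 0) (b @ cs)) \<phi>))"

definition is_code :: "nat \<Rightarrow> nat \<Rightarrow> nat \<Rightarrow> (complex list \<times> (complex \<times> complex) list) set
    \<Rightarrow> complex list \<Rightarrow> (complex \<times> complex) list \<Rightarrow> bool" where
  "is_code n k l F cp cs \<longleftrightarrow> (\<exists>\<phi>. defines_with n k l \<phi> cp cs F \<and>
     (\<forall>cp' cs'. length cp' = length cp \<and> length cs' = length cs \<and> defines_with n k l \<phi> cp' cs' F
        \<longrightarrow> cp' = cp \<and> cs' = cs))"

definition elim_finite_imaginaries :: "nat \<Rightarrow> bool" where
  "elim_finite_imaginaries n \<longleftrightarrow>
     (\<forall>k l (F :: (complex list \<times> (complex \<times> complex) list) set).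
        finite F \<and> (\<forall>(a, b)\<in>F. length a = k \<and> length b = l)
        \<longrightarrow> (\<exists>cp cs. is_code n k l F cp cs))"

end

theory Submission
  imports Defs "HOL-Computational_Algebra.Fundamental_Theorem_Algebra" "HOL-Analysis.Continuum_Not_Denumerable"
begin

text \<open>Let \<open>\<alpha>\<close> be transcendental over \<open>\<rat>\<close>, \<open>D\<close> a derivation of \<open>\<complex>\<close> with \<open>D \<alpha> = 1\<close>, and
  \<open>F = {(\<alpha>, 0), (-\<alpha>, 0)} \<subseteq> S\<close>. Besides the field automorphisms of \<open>\<complex>\<close> acting on both
  coordinates, \<open>\<M>\<^sub>n\<close> has the automorphisms \<open>(a, a') \<mapsto> (a, a' + f a)\<close> for additive \<open>f\<close>
  satisfying the linear identity that defines \<open>R\<^sub>n\<close>; for \<open>n \<ge> 2\<close> both \<open>D\<close> and \<open>D \<circ> D\<close> do.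
  A code of \<open>F\<close> is fixed by exactly the automorphisms fixing \<open>F\<close>. The shift by \<open>D \<circ> D\<close> fixes
  \<open>F\<close>, so every coordinate \<open>c\<close> of the code satisfies \<open>D (D c) = 0\<close>; then
  \<open>c = D c \<cdot> \<alpha> + (c - D c \<cdot> \<alpha>)\<close> with coefficients in \<open>ker D\<close>, and an automorphism of \<open>\<complex>\<close>
  negating \<open>\<alpha>\<close> over them fixes \<open>F\<close>, hence the code, which forces \<open>D c = 0\<close>. But then the
  shift by \<open>D\<close> fixes the code, hence \<open>F\<close>, although it moves \<open>(\<alpha>, 0)\<close> to \<open>(\<alpha>, 1)\<close>.\<close>

section \<open>Subfields and polynomials over them\<close>

definition subfield :: "'a::field set \<Rightarrow> bool" where
  "subfield K \<longleftrightarrow> 0 \<in> K \<and> 1 \<in> K \<and> (\<forall>x\<in>K. \<forall>y\<in>K. x + y \<in> K) \<and> (\<forall>x\<in>K. \<forall>y\<in>K. x * y \<in> K)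
     \<and> (\<forall>x\<in>K. - x \<in> K) \<and> (\<forall>x\<in>K. inverse x \<in> K)"

lemma subfield_0: "subfield K \<Longrightarrow> 0 \<in> K" by (simp add: subfield_def)
lemma subfield_1: "subfield K \<Longrightarrow> 1 \<in> K" by (simp add: subfield_def)
lemma subfield_add: "subfield K \<Longrightarrow> x \<in> K \<Longrightarrow> y \<in> K \<Longrightarrow> x + y \<in> K" by (simp add: subfield_def)
lemma subfield_mult: "subfield K \<Longrightarrow> x \<in> K \<Longrightarrow> y \<in> K \<Longrightarrow> x * y \<in> K" by (simp add: subfield_def)
lemma subfield_uminus: "subfield K \<Longrightarrow> x \<in> K \<Longrightarrow> - x \<in> K" by (simp add: subfield_def)
lemma subfield_inverse: "subfield K \<Longrightarrow> x \<in> K \<Longrightarrow> inverse x \<in> K" by (simp add: subfield_def)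

lemma subfield_diff: "subfield K \<Longrightarrow> x \<in> K \<Longrightarrow> y \<in> K \<Longrightarrow> x - y \<in> K"
  using subfield_add[of K x "- y"] subfield_uminus[of K y] by simp

lemma subfield_divide: "subfield K \<Longrightarrow> x \<in> K \<Longrightarrow> y \<in> K \<Longrightarrow> x / y \<in> K"
  using subfield_mult[of K x "inverse y"] subfield_inverse[of K y] by (simp add: divide_inverse)

lemma subfield_of_nat: "subfield K \<Longrightarrow> of_nat m \<in> K"
  by (induction m) (auto simp: subfield_0 subfield_1 subfield_add)

lemma subfield_sum: "subfield K \<Longrightarrow> (\<And>i. i \<in> A \<Longrightarrow> f i \<in> K) \<Longrightarrow> sum f A \<in> K"
  by (induction A rule: infinite_finite_induct) (auto simp: subfield_0 subfield_add)

lemma subfield_UNIV: "subfield UNIV"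
  by (simp add: subfield_def)

lemma subfield_Inter: "(\<And>L. L \<in> \<L> \<Longrightarrow> subfield L) \<Longrightarrow> subfield (\<Inter>\<L>)"
  unfolding subfield_def by blast

definition subfield_generated :: "'a::field set \<Rightarrow> 'a set" where
  "subfield_generated S = \<Inter>{L. subfield L \<and> S \<subseteq> L}"

lemma subfield_subfield_generated: "subfield (subfield_generated S)"
  unfolding subfield_generated_def by (rule subfield_Inter) blast

lemma subfield_generated_subset: "S \<subseteq> subfield_generated S"
  unfolding subfield_generated_def by blast

lemma subfield_generated_minimal: "subfield L \<Longrightarrow> S \<subseteq> L \<Longrightarrow> subfield_generated S \<subseteq> L"
  unfolding subfield_generated_def by blast

definition polys_over :: "'a::field set \<Rightarrow> 'a poly set" where
  "polys_over K = {p. \<forall>i. coeff p i \<in> K}"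

lemma polys_over_coeff: "p \<in> polys_over K \<Longrightarrow> coeff p i \<in> K"
  by (simp add: polys_over_def)

lemma polys_over_UNIV [simp]: "polys_over UNIV = UNIV"
  by (simp add: polys_over_def)

lemma polys_over_0: "subfield K \<Longrightarrow> 0 \<in> polys_over K"
  by (simp add: polys_over_def subfield_0)

lemma polys_over_const: "subfield K \<Longrightarrow> c \<in> K \<Longrightarrow> [:c:] \<in> polys_over K"
  by (auto simp: polys_over_def coeff_pCons subfield_0 split: nat.split)

lemma polys_over_1: "subfield K \<Longrightarrow> 1 \<in> polys_over K"
  using polys_over_const[of K 1] by (simp add: subfield_1 one_pCons)

lemma polys_over_pCons_iff: "pCons c p \<in> polys_over K \<longleftrightarrow> c \<in> K \<and> p \<in> polys_over K"
  by (auto simp: polys_over_def coeff_pCons split: nat.split)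

lemma polys_over_X: "subfield K \<Longrightarrow> [:0, 1:] \<in> polys_over K"
  by (simp add: polys_over_pCons_iff polys_over_0 subfield_0 subfield_1)

lemma polys_over_add: "subfield K \<Longrightarrow> p \<in> polys_over K \<Longrightarrow> q \<in> polys_over K \<Longrightarrow> p + q \<in> polys_over K"
  by (simp add: polys_over_def subfield_add)

lemma polys_over_uminus: "subfield K \<Longrightarrow> p \<in> polys_over K \<Longrightarrow> - p \<in> polys_over K"
  by (simp add: polys_over_def subfield_uminus)

lemma polys_over_diff: "subfield K \<Longrightarrow> p \<in> polys_over K \<Longrightarrow> q \<in> polys_over K \<Longrightarrow> p - q \<in> polys_over K"
  by (simp add: polys_over_def subfield_diff)

lemma polys_over_mult: "subfield K \<Longrightarrow> p \<in> polys_over K \<Longrightarrow> q \<in> polys_over K \<Longrightarrow> p * q \<in> polys_over K"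
  by (simp add: polys_over_def coeff_mult subfield_sum subfield_mult)

lemma polys_over_monom: "subfield K \<Longrightarrow> c \<in> K \<Longrightarrow> monom c k \<in> polys_over K"
  by (simp add: polys_over_def coeff_monom subfield_0)

lemma polys_over_pderiv: "subfield K \<Longrightarrow> p \<in> polys_over K \<Longrightarrow> pderiv p \<in> polys_over K"
  by (simp add: polys_over_def coeff_pderiv subfield_mult subfield_of_nat subfield_add subfield_1)

lemma polys_over_mono: "K \<subseteq> L \<Longrightarrow> p \<in> polys_over K \<Longrightarrow> p \<in> polys_over L"
  by (auto simp: polys_over_def)

lemma polys_over_poly: "subfield K \<Longrightarrow> p \<in> polys_over K \<Longrightarrow> x \<in> K \<Longrightarrow> poly p x \<in> K"
  by (induction p) (auto simp: polys_over_pCons_iff subfield_add subfield_mult subfield_0)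

lemma polys_over_pcompose:
  "subfield K \<Longrightarrow> p \<in> polys_over K \<Longrightarrow> q \<in> polys_over K \<Longrightarrow> pcompose p q \<in> polys_over K"
  by (induction p) (auto simp: polys_over_pCons_iff pcompose_pCons intro!: polys_over_add polys_over_mult polys_over_const)

lemma polys_over_divmod:
  assumes K: "subfield K" and m: "m \<in> polys_over K" "m \<noteq> 0"
  shows "p \<in> polys_over K \<Longrightarrow>
    \<exists>q r. q \<in> polys_over K \<and> r \<in> polys_over K \<and> p = q * m + r \<and> (r = 0 \<or> degree r < degree m)"
proof (induction "degree p" arbitrary: p rule: less_induct)
  case less
  show ?case
  proof (cases "p = 0 \<or> degree p < degree m")
    case True
    then show ?thesis using less.prems polys_over_0[OF K] by (intro exI[of _ 0] exI[of _ p]) auto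
  next
    case False
    hence p0: "p \<noteq> 0" and dge: "degree m \<le> degree p" by auto
    define c where "c = lead_coeff p / lead_coeff m"
    define k where "k = degree p - degree m"
    define p' where "p' = p - monom c k * m"
    have cK: "c \<in> K" unfolding c_def using less.prems m by (simp add: polys_over_coeff K subfield_divide)
    have c0: "c \<noteq> 0" using p0 m unfolding c_def by simp
    have dmon: "degree (monom c k * m) = degree p"
      using c0 m dge by (simp add: degree_mult_eq degree_monom_eq k_def)
    have cmon: "coeff (monom c k * m) (degree p) = lead_coeff p"
      using m dge by (simp add: coeff_monom_mult k_def c_def)
    have p'K: "p' \<in> polys_over K" unfolding p'_def using less.prems cK m
      by (simp add: K polys_over_diff polys_over_mult polys_over_monom)
    have dp': "degree p' \<le> degree p" unfolding p'_def
      using degree_diff_le[of p "degree p" "monom c k * m"] dmon by simp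
    have cp': "coeff p' (degree p) = 0" unfolding p'_def using cmon by simp
    show ?thesis
    proof (cases "p' = 0")
      case True
      hence "p = monom c k * m + 0" unfolding p'_def by simp
      then show ?thesis using polys_over_monom[OF K cK] polys_over_0[OF K] by blast
    next
      case False
      hence "degree p' < degree p" using dp' cp' by (metis le_neq_implies_less leading_coeff_0_iff)
      from less.hyps[OF this p'K] obtain q r where qr: "q \<in> polys_over K" "r \<in> polys_over K"
        "p' = q * m + r" "r = 0 \<or> degree r < degree m" by blast
      have "p = (q + monom c k) * m + r" using qr(3) unfolding p'_def by (simp add: algebra_simps)
      then show ?thesis using qr polys_over_add[OF K qr(1) polys_over_monom[OF K cK]] by blast
    qed
  qed
qed

definition algebraic_over :: "'a::field set \<Rightarrow> 'a \<Rightarrow> bool" where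
  "algebraic_over K z \<longleftrightarrow> (\<exists>p\<in>polys_over K. p \<noteq> 0 \<and> poly p z = 0)"

definition is_min_poly :: "'a::field set \<Rightarrow> 'a \<Rightarrow> 'a poly \<Rightarrow> bool" where
  "is_min_poly K z m \<longleftrightarrow> m \<in> polys_over K \<and> m \<noteq> 0 \<and> poly m z = 0 \<and>
     (\<forall>p\<in>polys_over K. p \<noteq> 0 \<longrightarrow> poly p z = 0 \<longrightarrow> degree m \<le> degree p)"

lemma algebraic_over_mono: "K \<subseteq> L \<Longrightarrow> algebraic_over K z \<Longrightarrow> algebraic_over L z"
  unfolding algebraic_over_def using polys_over_mono by blast

lemma algebraic_over_self: "subfield K \<Longrightarrow> z \<in> K \<Longrightarrow> algebraic_over K z"
  unfolding algebraic_over_def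
  by (intro bexI[of _ "[:-z, 1:]"]) (auto simp: polys_over_pCons_iff subfield_uminus polys_over_0 subfield_1)

lemma algebraic_over_uminus_iff:
  assumes K: "subfield K" shows "algebraic_over K (- z) \<longleftrightarrow> algebraic_over K z"
proof -
  have *: "algebraic_over K z" if alg: "algebraic_over K (- z)" for z :: 'a
  proof -
    obtain p where p: "p \<in> polys_over K" "p \<noteq> 0" "poly p (- z) = 0"
      using alg unfolding algebraic_over_def by blast
    have "[:0, -1:] \<in> polys_over K"
      using K by (simp add: polys_over_pCons_iff subfield_0 subfield_1 subfield_uminus polys_over_0)
    then have "pcompose p [:0, -1:] \<in> polys_over K" using polys_over_pcompose[OF K p(1)] by blast
    moreover have "pcompose p [:0, -1:] \<noteq> 0" using p(2) by (simp add: pcompose_eq_0_iff)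
    moreover have "poly (pcompose p [:0, -1:]) z = 0" using p(3) by (simp add: poly_pcompose)
    ultimately show ?thesis unfolding algebraic_over_def by blast
  qed
  show ?thesis using *[of z] *[of "- z"] by auto
qed

lemma min_poly_exists: assumes "algebraic_over K z" shows "\<exists>m. is_min_poly K z m"
proof -
  define P where "P d \<longleftrightarrow> (\<exists>p\<in>polys_over K. p \<noteq> 0 \<and> poly p z = 0 \<and> degree p = d)" for d
  have "\<exists>d. P d" using assms unfolding algebraic_over_def P_def by blast
  then have "P (LEAST d. P d)" by (rule LeastI_ex)
  then obtain m where m: "m \<in> polys_over K" "m \<noteq> 0" "poly m z = 0" "degree m = (LEAST d. P d)"
    unfolding P_def by blast
  have "degree m \<le> degree p" if "p \<in> polys_over K" "p \<noteq> 0" "poly p z = 0" for p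
    using m(4) that by (metis (mono_tags, lifting) Least_le P_def)
  then show ?thesis using m unfolding is_min_poly_def by blast
qed

lemma min_poly_degree_pos: "is_min_poly K z m \<Longrightarrow> degree m \<ge> 1"
  unfolding is_min_poly_def by (metis One_nat_def degree_eq_zeroE less_one not_less poly_const_conv pCons_0_0)

lemma min_poly_dvd:
  assumes K: "subfield K" and mp: "is_min_poly K z m" and p: "p \<in> polys_over K" "poly p z = 0"
  shows "\<exists>s\<in>polys_over K. p = s * m"
proof -
  have m: "m \<in> polys_over K" "m \<noteq> 0" "poly m z = 0" using mp unfolding is_min_poly_def by auto
  obtain q r where qr: "q \<in> polys_over K" "r \<in> polys_over K" "p = q * m + r" "r = 0 \<or> degree r < degree m"
    using polys_over_divmod[OF K m(1,2) p(1)] by blast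
  have "poly r z = 0" using qr(3) p(2) m(3) by simp
  hence "r = 0" using qr(2,4) mp unfolding is_min_poly_def by (meson not_less)
  then show ?thesis using qr by auto
qed

text \<open>The Euclidean descent showing that \<open>K[z]\<close> is a field.\<close>

lemma min_poly_inverse_aux:
  assumes K: "subfield K" and mp: "is_min_poly K z m"
  shows "r \<in> polys_over K \<Longrightarrow> poly r z \<noteq> 0 \<Longrightarrow> degree r < degree m \<Longrightarrow>
    \<exists>a\<in>polys_over K. poly a z * poly r z = 1"
proof (induction "degree r" arbitrary: r rule: less_induct)
  case less
  have m: "m \<in> polys_over K" "m \<noteq> 0" "poly m z = 0" using mp unfolding is_min_poly_def by auto
  show ?case
  proof (cases "degree r = 0")
    case True
    then obtain c where c: "r = [:c:]" by (metis degree_eq_zeroE)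
    have "c \<in> K" using less.prems(1) c by (simp add: polys_over_pCons_iff)
    moreover have "c \<noteq> 0" using less.prems(2) c by simp
    ultimately show ?thesis
      using c by (intro bexI[of _ "[:inverse c:]"]) (auto simp: polys_over_const K subfield_inverse)
  next
    case False
    have r0: "r \<noteq> 0" using less.prems(2) by auto
    obtain q s where qs: "q \<in> polys_over K" "s \<in> polys_over K" "m = q * r + s" "s = 0 \<or> degree s < degree r"
      using polys_over_divmod[OF K less.prems(1) r0 m(1)] by blast
    have q0: "q \<noteq> 0"
      using qs less.prems(3) m(2) by auto
    have dqr: "degree (q * r) = degree q + degree r" using q0 r0 by (rule degree_mult_eq)
    have "degree m = degree (q * r)"
    proof -
      have "degree s < degree (q * r)" if "s \<noteq> 0" using qs(4) that dqr by auto
      then show ?thesis using qs(3) by (metis add.right_neutral degree_add_eq_left)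
    qed
    hence dq: "degree q < degree m" using dqr False by simp
    have qz: "poly q z \<noteq> 0"
      using mp qs(1) q0 dq unfolding is_min_poly_def by (meson not_less)
    have sz: "poly s z = - poly q z * poly r z"
      using qs(3) m(3) by (simp add: eq_neg_iff_add_eq_0 add.commute)
    hence sz0: "poly s z \<noteq> 0" using qz less.prems(2) by simp
    hence dsr: "degree s < degree r" using qs(4) by auto
    obtain a where a: "a \<in> polys_over K" "poly a z * poly s z = 1"
      using less.hyps[OF dsr qs(2) sz0] dsr less.prems(3) by auto
    have "poly (- (a * q)) z * poly r z = 1" using sz a(2) by (simp add: mult.assoc)
    with polys_over_uminus[OF K polys_over_mult[OF K a(1) qs(1)]] show ?thesis by (rule rev_bexI)
  qed
qed

lemma min_poly_inverse:
  assumes K: "subfield K" and mp: "is_min_poly K z m" and p: "p \<in> polys_over K" "poly p z \<noteq> 0"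
  shows "\<exists>a\<in>polys_over K. poly a z * poly p z = 1"
proof -
  have m: "m \<in> polys_over K" "m \<noteq> 0" "poly m z = 0" using mp unfolding is_min_poly_def by auto
  obtain q r where qr: "q \<in> polys_over K" "r \<in> polys_over K" "p = q * m + r" "r = 0 \<or> degree r < degree m"
    using polys_over_divmod[OF K m(1,2) p(1)] by blast
  have rz: "poly r z = poly p z" using qr(3) m(3) by simp
  hence "degree r < degree m" using qr(4) p(2) by auto
  then show ?thesis using min_poly_inverse_aux[OF K mp qr(2)] rz p(2) by auto
qed

lemma min_poly_pderiv_nonzero:
  fixes K :: "'a::field_char_0 set"
  assumes K: "subfield K" and mp: "is_min_poly K z m" shows "poly (pderiv m) z \<noteq> 0"
proof
  assume h: "poly (pderiv m) z = 0"
  have m: "m \<in> polys_over K" using mp unfolding is_min_poly_def by auto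
  have d: "degree m \<ge> 1" using min_poly_degree_pos[OF mp] .
  have "pderiv m \<noteq> 0" using d by (simp add: pderiv_eq_0_iff)
  then have "degree m \<le> degree (pderiv m)"
    using polys_over_pderiv[OF K m] mp h unfolding is_min_poly_def by blast
  then show False using d by (simp add: degree_pderiv)
qed

section \<open>Embeddings and derivations of subfields\<close>

definition additive_on :: "'a::field set \<Rightarrow> ('a \<Rightarrow> 'a) \<Rightarrow> bool" where
  "additive_on K f \<longleftrightarrow> (\<forall>x\<in>K. \<forall>y\<in>K. f (x + y) = f x + f y)"

definition field_emb :: "'a::field set \<Rightarrow> ('a \<Rightarrow> 'a) \<Rightarrow> bool" where
  "field_emb K f \<longleftrightarrow> subfield K \<and> f 1 = 1 \<and> (\<forall>x\<in>K. \<forall>y\<in>K. f (x + y) = f x + f y \<and> f (x * y) = f x * f y)"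

definition derivation_on :: "'a::field set \<Rightarrow> ('a \<Rightarrow> 'a) \<Rightarrow> bool" where
  "derivation_on K D \<longleftrightarrow> subfield K \<and> (\<forall>x\<in>K. \<forall>y\<in>K. D (x + y) = D x + D y \<and> D (x * y) = x * D y + y * D x)"

lemma field_emb_subfield: "field_emb K f \<Longrightarrow> subfield K" by (simp add: field_emb_def)
lemma field_emb_additive: "field_emb K f \<Longrightarrow> additive_on K f" by (simp add: field_emb_def additive_on_def)
lemma field_emb_add: "field_emb K f \<Longrightarrow> x \<in> K \<Longrightarrow> y \<in> K \<Longrightarrow> f (x + y) = f x + f y" by (simp add: field_emb_def)
lemma field_emb_mult: "field_emb K f \<Longrightarrow> x \<in> K \<Longrightarrow> y \<in> K \<Longrightarrow> f (x * y) = f x * f y" by (simp add: field_emb_def)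
lemma field_emb_1: "field_emb K f \<Longrightarrow> f 1 = 1" by (simp add: field_emb_def)

lemma derivation_subfield: "derivation_on K D \<Longrightarrow> subfield K" by (simp add: derivation_on_def)
lemma derivation_additive: "derivation_on K D \<Longrightarrow> additive_on K D" by (simp add: derivation_on_def additive_on_def)
lemma derivation_add: "derivation_on K D \<Longrightarrow> x \<in> K \<Longrightarrow> y \<in> K \<Longrightarrow> D (x + y) = D x + D y" by (simp add: derivation_on_def)
lemma derivation_mult: "derivation_on K D \<Longrightarrow> x \<in> K \<Longrightarrow> y \<in> K \<Longrightarrow> D (x * y) = x * D y + y * D x" by (simp add: derivation_on_def)

lemma field_emb_cong: "field_emb K f \<Longrightarrow> (\<And>x. x \<in> K \<Longrightarrow> g x = f x) \<Longrightarrow> field_emb K g"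
  unfolding field_emb_def by (auto simp: subfield_add subfield_mult subfield_1)

lemma derivation_cong: "derivation_on K D \<Longrightarrow> (\<And>x. x \<in> K \<Longrightarrow> E x = D x) \<Longrightarrow> derivation_on K E"
  unfolding derivation_on_def by (auto simp: subfield_add subfield_mult)

lemma additive_on_0: "subfield K \<Longrightarrow> additive_on K f \<Longrightarrow> f 0 = 0"
  unfolding additive_on_def using subfield_0 by fastforce

lemma additive_on_uminus:
  assumes "subfield K" "additive_on K f" "x \<in> K" shows "f (- x) = - f x"
proof -
  have "f (x + - x) = f x + f (- x)" using assms subfield_uminus unfolding additive_on_def by blast
  thus ?thesis using additive_on_0[OF assms(1,2)] by (simp add: eq_neg_iff_add_eq_0 add.commute)
qed

lemma additive_on_diff:
  assumes "subfield K" "additive_on K f" "x \<in> K" "y \<in> K" shows "f (x - y) = f x - f y"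
  using assms additive_on_uminus[OF assms(1,2,4)] subfield_uminus[OF assms(1,4)]
  unfolding additive_on_def by (metis diff_conv_add_uminus)

lemma additive_on_sum:
  assumes "subfield K" "additive_on K f"
  shows "(\<And>i. i \<in> A \<Longrightarrow> g i \<in> K) \<Longrightarrow> f (sum g A) = (\<Sum>i\<in>A. f (g i))"
proof (induction A rule: infinite_finite_induct)
  case (insert x F)
  have "sum g F \<in> K" using insert.prems by (intro subfield_sum[OF assms(1)]) auto
  then show ?case using insert assms(2) unfolding additive_on_def by auto
qed (use additive_on_0[OF assms] in simp_all)

lemma field_emb_0: "field_emb K f \<Longrightarrow> f 0 = 0"
  using additive_on_0 field_emb_subfield field_emb_additive by blast

lemma derivation_0: "derivation_on K D \<Longrightarrow> D 0 = 0"
  using additive_on_0 derivation_subfield derivation_additive by blast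

lemma derivation_1: assumes "derivation_on K D" shows "D 1 = 0"
proof -
  have "D 1 = D 1 + D 1"
    using derivation_mult[OF assms, of 1 1] subfield_1[OF derivation_subfield[OF assms]] by simp
  then show ?thesis by (simp only: add_cancel_right_right)
qed

lemma field_emb_nonzero:
  assumes "field_emb K f" "x \<in> K" "x \<noteq> 0" shows "f x \<noteq> 0"
proof
  assume "f x = 0"
  have "f x * f (inverse x) = 1"
    using field_emb_mult[OF assms(1,2) subfield_inverse[OF field_emb_subfield[OF assms(1)] assms(2)]]
      field_emb_1[OF assms(1)] assms(3) by simp
  thus False using \<open>f x = 0\<close> by simp
qed

lemma field_emb_inverse:
  assumes "field_emb K f" "x \<in> K" shows "f (inverse x) = inverse (f x)"
proof (cases "x = 0")
  case False
  have "f x * f (inverse x) = 1"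
    using field_emb_mult[OF assms(1,2) subfield_inverse[OF field_emb_subfield[OF assms(1)] assms(2)]]
      field_emb_1[OF assms(1)] False by simp
  then show ?thesis by (metis inverse_unique)
qed (simp add: field_emb_0[OF assms(1)])

lemma field_emb_inj_on: assumes "field_emb K f" shows "inj_on f K"
proof (rule inj_onI)
  fix x y assume xy: "x \<in> K" "y \<in> K" "f x = f y"
  hence "f (x - y) = 0" using additive_on_diff[OF field_emb_subfield[OF assms] field_emb_additive[OF assms]] by simp
  thus "x = y"
    using field_emb_nonzero[OF assms] subfield_diff[OF field_emb_subfield[OF assms] xy(1,2)]
    by (metis eq_iff_diff_eq_0)
qed

lemma field_emb_UNIV:
  assumes "field_emb UNIV f"
  shows "f (a + b) = f a + f b" "f (a * b) = f a * f b" "f 0 = 0" "f 1 = 1" "f (- a) = - f a"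
    "f (x ^ k) = f x ^ k" "f (of_nat k) = of_nat k"
proof -
  show add: "f (a + b) = f a + f b" and mult: "\<And>a b. f (a * b) = f a * f b"
    using assms unfolding field_emb_def by auto
  show "f 0 = 0" "f 1 = 1" using field_emb_0[OF assms] field_emb_1[OF assms] .
  show "f (- a) = - f a" using additive_on_uminus[OF subfield_UNIV field_emb_additive[OF assms]] by simp
  show "f (x ^ k) = f x ^ k" by (induction k) (simp_all add: mult field_emb_1[OF assms])
  show "f (of_nat k) = of_nat k"
    by (induction k) (simp_all add: field_emb_0[OF assms] field_emb_1[OF assms] field_emb_add[OF assms])
qed

lemma derivation_UNIV:
  assumes "derivation_on UNIV D"
  shows "D (a + b) = D a + D b" "D (a * b) = a * D b + b * D a" "D 0 = 0" "D 1 = 0" "D (- a) = - D a"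
    "D (of_nat k) = 0"
proof -
  show add: "D (a + b) = D a + D b" and "D (a * b) = a * D b + b * D a"
    using assms unfolding derivation_on_def by auto
  show "D 0 = 0" "D 1 = 0" using derivation_0[OF assms] derivation_1[OF assms] .
  show "D (- a) = - D a" using additive_on_uminus[OF subfield_UNIV derivation_additive[OF assms]] by simp
  show "D (of_nat k) = 0"
    by (induction k) (simp_all add: derivation_0[OF assms] derivation_1[OF assms] derivation_add[OF assms])
qed

lemma derivation_power:
  assumes D: "derivation_on UNIV D" shows "D (x ^ i) = of_nat i * x ^ (i - 1) * D x"
proof (induction i)
  case (Suc i)
  have "D (x ^ Suc i) = x * D (x ^ i) + x ^ i * D x" using derivation_UNIV(2)[OF D, of x "x ^ i"] by simp
  also have "\<dots> = of_nat (Suc i) * x ^ (Suc i - 1) * D x"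
    using Suc by (cases i) (simp_all add: algebra_simps)
  finally show ?case .
qed (simp add: derivation_UNIV[OF D])

lemma subfield_derivation_kernel:
  assumes D: "derivation_on UNIV D" shows "subfield {x. D x = 0}"
proof -
  have "D (inverse x) = 0" if x: "D x = 0" for x
  proof (cases "x = 0")
    case False
    have "D (x * inverse x) = x * D (inverse x) + inverse x * D x" using derivation_UNIV(2)[OF D] .
    then show ?thesis using False x derivation_UNIV(4)[OF D] by simp
  qed (simp add: derivation_UNIV[OF D])
  then show ?thesis unfolding subfield_def by (simp add: derivation_UNIV[OF D])
qed

lemma map_poly_add_on:
  assumes "subfield K" "additive_on K f" "p \<in> polys_over K" "q \<in> polys_over K"
  shows "map_poly f (p + q) = map_poly f p + map_poly f q"
  using assms additive_on_0[OF assms(1,2)]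
  by (intro poly_eqI) (simp add: coeff_map_poly additive_on_def polys_over_coeff)

lemma map_poly_diff_on:
  assumes "subfield K" "additive_on K f" "p \<in> polys_over K" "q \<in> polys_over K"
  shows "map_poly f (p - q) = map_poly f p - map_poly f q"
  using assms additive_on_0[OF assms(1,2)]
  by (intro poly_eqI) (simp add: coeff_map_poly additive_on_diff polys_over_coeff)

lemma map_poly_polys_over: "f 0 = 0 \<Longrightarrow> p \<in> polys_over K \<Longrightarrow> map_poly f p \<in> polys_over (f ` K)"
  by (simp add: polys_over_def coeff_map_poly)

lemma map_poly_mult_field_emb:
  assumes f: "field_emb K f" and pq: "p \<in> polys_over K" "q \<in> polys_over K"
  shows "map_poly f (p * q) = map_poly f p * map_poly f q"
proof (intro poly_eqI)
  fix n
  have K: "subfield K" using field_emb_subfield[OF f] .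
  have f0: "f 0 = 0" using field_emb_0[OF f] .
  have "coeff (map_poly f (p * q)) n = f (\<Sum>i\<le>n. coeff p i * coeff q (n - i))"
    by (simp add: coeff_map_poly f0 coeff_mult)
  also have "\<dots> = (\<Sum>i\<le>n. f (coeff p i) * f (coeff q (n - i)))"
    using pq by (simp add: additive_on_sum[OF K field_emb_additive[OF f]] field_emb_mult[OF f]
        subfield_mult[OF K] polys_over_coeff)
  also have "\<dots> = coeff (map_poly f p * map_poly f q) n"
    by (simp add: coeff_mult coeff_map_poly f0)
  finally show "coeff (map_poly f (p * q)) n = coeff (map_poly f p * map_poly f q) n" .
qed

lemma map_poly_field_emb_eq_0_iff:
  assumes f: "field_emb K f" and p: "p \<in> polys_over K" shows "map_poly f p = 0 \<longleftrightarrow> p = 0"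
proof
  assume "map_poly f p = 0"
  then have "f (coeff p n) = 0" for n by (metis coeff_0 coeff_map_poly field_emb_0[OF f])
  then show "p = 0" using field_emb_nonzero[OF f polys_over_coeff[OF p]] by (metis poly_eqI coeff_0)
qed simp

lemma map_poly_field_emb_surj:
  assumes f: "field_emb K f" and p': "p' \<in> polys_over (f ` K)" shows "\<exists>p\<in>polys_over K. map_poly f p = p'"
proof -
  define g where "g = inv_into K f"
  have K: "subfield K" using field_emb_subfield[OF f] .
  have "f (g 0) = 0" "g 0 \<in> K"
    using field_emb_0[OF f] subfield_0[OF K] unfolding g_def by (auto simp: f_inv_into_f inv_into_into)
  then have g0: "g 0 = 0" using field_emb_nonzero[OF f] by blast
  have "map_poly g p' \<in> polys_over K" using p' g0 unfolding polys_over_def g_def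
    by (auto simp: coeff_map_poly inv_into_into)
  moreover have "map_poly f (map_poly g p') = p'"
    using p' g0 field_emb_0[OF f] unfolding polys_over_def g_def
    by (intro poly_eqI) (auto simp: coeff_map_poly f_inv_into_f)
  ultimately show ?thesis by blast
qed

lemma map_poly_derivation_mult:
  assumes D: "derivation_on K D" and pq: "p \<in> polys_over K" "q \<in> polys_over K"
  shows "map_poly D (p * q) = map_poly D p * q + p * map_poly D q"
proof (intro poly_eqI)
  fix n
  have K: "subfield K" using derivation_subfield[OF D] .
  have D0: "D 0 = 0" using derivation_0[OF D] .
  have "coeff (map_poly D (p * q)) n = D (\<Sum>i\<le>n. coeff p i * coeff q (n - i))"
    by (simp add: coeff_map_poly D0 coeff_mult)
  also have "\<dots> = (\<Sum>i\<le>n. D (coeff p i) * coeff q (n - i) + coeff p i * D (coeff q (n - i)))"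
    using pq by (simp add: additive_on_sum[OF K derivation_additive[OF D]] derivation_mult[OF D]
        subfield_mult[OF K] polys_over_coeff algebra_simps)
  also have "\<dots> = coeff (map_poly D p * q + p * map_poly D q) n"
    by (simp add: coeff_mult coeff_map_poly D0 sum.distrib)
  finally show "coeff (map_poly D (p * q)) n = coeff (map_poly D p * q + p * map_poly D q) n" .
qed

text \<open>The value that a derivation extending \<open>D\<close> with \<open>z \<mapsto> w\<close> must take at \<open>p(z)\<close>.\<close>

definition poly_der :: "('a::field \<Rightarrow> 'a) \<Rightarrow> 'a \<Rightarrow> 'a \<Rightarrow> 'a poly \<Rightarrow> 'a" where
  "poly_der D z w p = poly (map_poly D p) z + poly (pderiv p) z * w"

lemma poly_der_diff:
  assumes D: "derivation_on K D" and pq: "p \<in> polys_over K" "q \<in> polys_over K"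
  shows "poly_der D z w (p - q) = poly_der D z w p - poly_der D z w q"
  unfolding poly_der_def map_poly_diff_on[OF derivation_subfield[OF D] derivation_additive[OF D] pq]
  by (simp add: pderiv_diff algebra_simps)

lemma poly_der_add:
  assumes D: "derivation_on K D" and pq: "p \<in> polys_over K" "q \<in> polys_over K"
  shows "poly_der D z w (p + q) = poly_der D z w p + poly_der D z w q"
  unfolding poly_der_def map_poly_add_on[OF derivation_subfield[OF D] derivation_additive[OF D] pq]
  by (simp add: pderiv_add algebra_simps)

lemma poly_der_mult:
  assumes "derivation_on K D" "p \<in> polys_over K" "q \<in> polys_over K"
  shows "poly_der D z w (p * q) = poly_der D z w p * poly q z + poly p z * poly_der D z w q"
  unfolding poly_der_def using map_poly_derivation_mult[OF assms]
  by (simp add: pderiv_mult algebra_simps)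

lemma poly_der_const: "derivation_on K D \<Longrightarrow> poly_der D z w [:c:] = D c"
  unfolding poly_der_def by (simp add: derivation_0 map_poly_pCons)

lemma poly_der_X: "derivation_on K D \<Longrightarrow> poly_der D z w [:0, 1:] = w"
  unfolding poly_der_def by (simp add: derivation_0 derivation_1 map_poly_pCons pderiv_pCons)

lemma poly_der_1: "derivation_on K D \<Longrightarrow> poly_der D z w 1 = 0"
  using poly_der_const[of K D z w 1] by (simp add: derivation_1 one_pCons)

section \<open>Simple extensions\<close>

definition adjoin :: "'a::field set \<Rightarrow> 'a \<Rightarrow> 'a set" where
  "adjoin K z = {poly p z / poly q z | p q. p \<in> polys_over K \<and> q \<in> polys_over K \<and> poly q z \<noteq> 0}"

lemma adjoinI:
  "p \<in> polys_over K \<Longrightarrow> q \<in> polys_over K \<Longrightarrow> poly q z \<noteq> 0 \<Longrightarrow> poly p z / poly q z \<in> adjoin K z"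
  unfolding adjoin_def by blast

lemma adjoinE:
  assumes "x \<in> adjoin K z"
  obtains p q where "p \<in> polys_over K" "q \<in> polys_over K" "poly q z \<noteq> 0" "x = poly p z / poly q z"
  using assms unfolding adjoin_def by blast

lemma adjoin_base: "subfield K \<Longrightarrow> x \<in> K \<Longrightarrow> x \<in> adjoin K z"
  using adjoinI[OF polys_over_const polys_over_1, of K x z] by simp

lemma adjoin_generator: "subfield K \<Longrightarrow> z \<in> adjoin K z"
  using adjoinI[OF polys_over_X polys_over_1, of K z] by simp

lemma subfield_adjoin:
  assumes K: "subfield K" shows "subfield (adjoin K z)"
  unfolding subfield_def
proof (intro conjI ballI)
  show "0 \<in> adjoin K z" "1 \<in> adjoin K z" using adjoin_base[OF K] subfield_0[OF K] subfield_1[OF K] by auto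
next
  fix x y assume "x \<in> adjoin K z" "y \<in> adjoin K z"
  then obtain p1 q1 p2 q2 where 1: "p1 \<in> polys_over K" "q1 \<in> polys_over K" "poly q1 z \<noteq> 0" "x = poly p1 z / poly q1 z"
    and 2: "p2 \<in> polys_over K" "q2 \<in> polys_over K" "poly q2 z \<noteq> 0" "y = poly p2 z / poly q2 z"
    by (metis adjoinE)
  have "x + y = poly (p1 * q2 + p2 * q1) z / poly (q1 * q2) z"
    using 1(3) 2(3) unfolding 1(4) 2(4) by (simp add: field_simps)
  moreover have "poly (p1 * q2 + p2 * q1) z / poly (q1 * q2) z \<in> adjoin K z"
    using 1 2 by (intro adjoinI) (simp_all add: K polys_over_add polys_over_mult)
  ultimately show "x + y \<in> adjoin K z" by simp
  have "x * y = poly (p1 * p2) z / poly (q1 * q2) z" unfolding 1(4) 2(4) by simp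
  moreover have "poly (p1 * p2) z / poly (q1 * q2) z \<in> adjoin K z"
    using 1 2 by (intro adjoinI) (simp_all add: K polys_over_mult)
  ultimately show "x * y \<in> adjoin K z" by simp
next
  fix x assume "x \<in> adjoin K z"
  then obtain p q where pq: "p \<in> polys_over K" "q \<in> polys_over K" "poly q z \<noteq> 0" "x = poly p z / poly q z"
    by (rule adjoinE)
  have "- x = poly (- p) z / poly q z" using pq by simp
  moreover have "poly (- p) z / poly q z \<in> adjoin K z" using pq by (intro adjoinI) (simp_all add: K polys_over_uminus)
  ultimately show "- x \<in> adjoin K z" by simp
  show "inverse x \<in> adjoin K z"
  proof (cases "poly p z = 0")
    case True
    then show ?thesis using pq adjoin_base[OF K subfield_0[OF K]] by simp
  next
    case False
    have "inverse x = poly q z / poly p z" using pq by simp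
    then show ?thesis using pq False by (auto intro!: adjoinI)
  qed
qed

lemma adjoin_uminus: assumes K: "subfield K" shows "adjoin K (- z) = adjoin K z"
proof -
  have *: "adjoin K (- z) \<subseteq> adjoin K z" for z :: 'a
  proof
    fix x assume "x \<in> adjoin K (- z)"
    then obtain p q where pq: "p \<in> polys_over K" "q \<in> polys_over K" "poly q (- z) \<noteq> 0"
      "x = poly p (- z) / poly q (- z)" by (rule adjoinE)
    have neg: "[:0, -1:] \<in> polys_over K"
      using K by (simp add: polys_over_pCons_iff subfield_0 subfield_1 subfield_uminus polys_over_0)
    have "x = poly (pcompose p [:0, -1:]) z / poly (pcompose q [:0, -1:]) z"
      "poly (pcompose q [:0, -1:]) z \<noteq> 0"
      using pq(3,4) by (simp_all add: poly_pcompose)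
    then show "x \<in> adjoin K z"
      using adjoinI[OF polys_over_pcompose[OF K pq(1) neg] polys_over_pcompose[OF K pq(2) neg]] by simp
  qed
  show ?thesis using *[of z] *[of "- z"] by simp
qed

text \<open>A fixed choice of representation of each element of \<open>K(z)\<close> as a quotient \<open>p(z)/q(z)\<close>;
  the extensions below are defined through it and shown to be independent of the choice.\<close>

definition frac_rep :: "'a::field set \<Rightarrow> 'a \<Rightarrow> 'a \<Rightarrow> 'a poly \<times> 'a poly" where
  "frac_rep K z x = (SOME (p, q). p \<in> polys_over K \<and> q \<in> polys_over K \<and> poly q z \<noteq> 0 \<and> x = poly p z / poly q z)"

lemma frac_rep:
  assumes "x \<in> adjoin K z" and "frac_rep K z x = (p, q)"
  shows "p \<in> polys_over K" "q \<in> polys_over K" "poly q z \<noteq> 0" "x = poly p z / poly q z"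
proof -
  have "\<exists>pq. case pq of (p, q) \<Rightarrow> p \<in> polys_over K \<and> q \<in> polys_over K \<and> poly q z \<noteq> 0 \<and> x = poly p z / poly q z"
    using assms(1) by (auto elim!: adjoinE)
  from someI_ex[OF this] assms(2)
  show "p \<in> polys_over K" "q \<in> polys_over K" "poly q z \<noteq> 0" "x = poly p z / poly q z"
    unfolding frac_rep_def by auto
qed

definition conjugate_over :: "'a::field set \<Rightarrow> ('a \<Rightarrow> 'a) \<Rightarrow> 'a \<Rightarrow> 'a \<Rightarrow> bool" where
  "conjugate_over K f z w \<longleftrightarrow> (\<forall>p\<in>polys_over K. poly p z = 0 \<longleftrightarrow> poly (map_poly f p) w = 0)"

definition extend_emb :: "'a::field set \<Rightarrow> ('a \<Rightarrow> 'a) \<Rightarrow> 'a \<Rightarrow> 'a \<Rightarrow> 'a \<Rightarrow> 'a" where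
  "extend_emb K f z w x = (case frac_rep K z x of (p, q) \<Rightarrow> poly (map_poly f p) w / poly (map_poly f q) w)"

lemma extend_emb_eq:
  assumes f: "field_emb K f" and C: "conjugate_over K f z w"
    and pq: "p \<in> polys_over K" "q \<in> polys_over K" "poly q z \<noteq> 0"
  shows "extend_emb K f z w (poly p z / poly q z) = poly (map_poly f p) w / poly (map_poly f q) w"
proof -
  have K: "subfield K" using field_emb_subfield[OF f] .
  define x where "x = poly p z / poly q z"
  obtain p' q' where pq': "frac_rep K z x = (p', q')" by fastforce
  note r = frac_rep[OF adjoinI[OF pq, folded x_def] pq']
  have "poly (p * q' - p' * q) z = 0" using r pq(3) unfolding x_def by (simp add: field_simps)
  moreover have "p * q' - p' * q \<in> polys_over K" using r pq by (simp add: K polys_over_diff polys_over_mult)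
  ultimately have "poly (map_poly f (p * q' - p' * q)) w = 0" using C unfolding conjugate_over_def by blast
  hence e: "poly (map_poly f p) w * poly (map_poly f q') w = poly (map_poly f p') w * poly (map_poly f q) w"
    using r pq by (simp add: map_poly_diff_on[OF K field_emb_additive[OF f]] map_poly_mult_field_emb[OF f]
        polys_over_mult[OF K])
  have "poly (map_poly f q) w \<noteq> 0" "poly (map_poly f q') w \<noteq> 0"
    using C pq r unfolding conjugate_over_def by auto
  with e show ?thesis unfolding extend_emb_def x_def[symmetric] pq' by (simp add: field_simps)
qed

lemma field_emb_extend_emb:
  assumes f: "field_emb K f" and C: "conjugate_over K f z w"
  shows "field_emb (adjoin K z) (extend_emb K f z w)"
proof -
  have K: "subfield K" using field_emb_subfield[OF f] .
  have nz: "poly (map_poly f q) w \<noteq> 0" if "q \<in> polys_over K" "poly q z \<noteq> 0" for q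
    using C that unfolding conjugate_over_def by auto
  note EQ = extend_emb_eq[OF f C]
  show ?thesis unfolding field_emb_def
  proof (intro conjI ballI)
    show "subfield (adjoin K z)" using subfield_adjoin[OF K] .
    show "extend_emb K f z w 1 = 1"
      using EQ[OF polys_over_1[OF K] polys_over_1[OF K]] by (simp add: field_emb_1[OF f])
  next
    fix x y assume "x \<in> adjoin K z" "y \<in> adjoin K z"
    then obtain p1 q1 p2 q2 where 1: "p1 \<in> polys_over K" "q1 \<in> polys_over K" "poly q1 z \<noteq> 0" "x = poly p1 z / poly q1 z"
      and 2: "p2 \<in> polys_over K" "q2 \<in> polys_over K" "poly q2 z \<noteq> 0" "y = poly p2 z / poly q2 z"
      by (metis adjoinE)
    have n1: "poly (map_poly f q1) w \<noteq> 0" and n2: "poly (map_poly f q2) w \<noteq> 0" using nz 1 2 by auto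
    have ex: "extend_emb K f z w x = poly (map_poly f p1) w / poly (map_poly f q1) w"
      using EQ[OF 1(1-3)] 1(4) by simp
    have ey: "extend_emb K f z w y = poly (map_poly f p2) w / poly (map_poly f q2) w"
      using EQ[OF 2(1-3)] 2(4) by simp
    have "x + y = poly (p1 * q2 + p2 * q1) z / poly (q1 * q2) z"
      using 1(3) 2(3) unfolding 1(4) 2(4) by (simp add: field_simps)
    hence "extend_emb K f z w (x + y) = poly (map_poly f (p1 * q2 + p2 * q1)) w / poly (map_poly f (q1 * q2)) w"
      using EQ[of "p1 * q2 + p2 * q1" "q1 * q2"] 1 2 by (simp add: polys_over_add polys_over_mult K)
    also have "\<dots> = extend_emb K f z w x + extend_emb K f z w y"
      unfolding ex ey using 1(1,2) 2(1,2) n1 n2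
      by (simp add: map_poly_add_on[OF K field_emb_additive[OF f]] map_poly_mult_field_emb[OF f]
          polys_over_mult K field_simps)
    finally show "extend_emb K f z w (x + y) = extend_emb K f z w x + extend_emb K f z w y" .
    have "x * y = poly (p1 * p2) z / poly (q1 * q2) z" unfolding 1(4) 2(4) by simp
    hence "extend_emb K f z w (x * y) = poly (map_poly f (p1 * p2)) w / poly (map_poly f (q1 * q2)) w"
      using EQ[of "p1 * p2" "q1 * q2"] 1 2 by (simp add: polys_over_mult K)
    also have "\<dots> = extend_emb K f z w x * extend_emb K f z w y"
      unfolding ex ey using 1(1,2) 2(1,2) by (simp add: map_poly_mult_field_emb[OF f])
    finally show "extend_emb K f z w (x * y) = extend_emb K f z w x * extend_emb K f z w y" .
  qed
qed

lemma extend_emb_base: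
  assumes f: "field_emb K f" and C: "conjugate_over K f z w" and x: "x \<in> K"
  shows "extend_emb K f z w x = f x"
  using extend_emb_eq[OF f C polys_over_const polys_over_1, of x] field_emb_subfield[OF f] x
  by (simp add: map_poly_pCons field_emb_0[OF f] field_emb_1[OF f])

lemma extend_emb_generator:
  assumes f: "field_emb K f" and C: "conjugate_over K f z w"
  shows "extend_emb K f z w z = w"
  using extend_emb_eq[OF f C polys_over_X polys_over_1] field_emb_subfield[OF f]
  by (simp add: map_poly_pCons field_emb_0[OF f] field_emb_1[OF f])

lemma extend_emb_image:
  assumes f: "field_emb K f" and C: "conjugate_over K f z w"
  shows "extend_emb K f z w ` adjoin K z = adjoin (f ` K) w"
proof
  show "extend_emb K f z w ` adjoin K z \<subseteq> adjoin (f ` K) w"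
  proof
    fix y assume "y \<in> extend_emb K f z w ` adjoin K z"
    then obtain p q where pq: "p \<in> polys_over K" "q \<in> polys_over K" "poly q z \<noteq> 0"
      "y = extend_emb K f z w (poly p z / poly q z)" by (auto elim!: adjoinE)
    have "poly (map_poly f q) w \<noteq> 0" using C pq unfolding conjugate_over_def by auto
    then show "y \<in> adjoin (f ` K) w"
      using pq extend_emb_eq[OF f C pq(1-3)] map_poly_polys_over[where f = f, OF field_emb_0[OF f]]
      by (auto intro!: adjoinI)
  qed
  show "adjoin (f ` K) w \<subseteq> extend_emb K f z w ` adjoin K z"
  proof
    fix y assume "y \<in> adjoin (f ` K) w"
    then obtain p' q' where pq': "p' \<in> polys_over (f ` K)" "q' \<in> polys_over (f ` K)" "poly q' w \<noteq> 0"
      "y = poly p' w / poly q' w" by (rule adjoinE)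
    obtain p q where p: "p \<in> polys_over K" "map_poly f p = p'" and q: "q \<in> polys_over K" "map_poly f q = q'"
      using map_poly_field_emb_surj[OF f pq'(1)] map_poly_field_emb_surj[OF f pq'(2)] by blast
    have qz: "poly q z \<noteq> 0" using C q pq'(3) unfolding conjugate_over_def by auto
    have "y = extend_emb K f z w (poly p z / poly q z)" using extend_emb_eq[OF f C p(1) q(1) qz] p q pq' by simp
    then show "y \<in> extend_emb K f z w ` adjoin K z" using adjoinI[OF p(1) q(1) qz] by blast
  qed
qed

lemma conjugate_over_transcendental:
  assumes f: "field_emb K f" and z: "\<not> algebraic_over K z" and w: "\<not> algebraic_over (f ` K) w"
  shows "conjugate_over K f z w"
  unfolding conjugate_over_def
proof
  fix p assume p: "p \<in> polys_over K"
  have "poly p z = 0 \<longleftrightarrow> p = 0" using z p unfolding algebraic_over_def by auto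
  also have "\<dots> \<longleftrightarrow> map_poly f p = 0" using map_poly_field_emb_eq_0_iff[OF f p] by simp
  also have "\<dots> \<longleftrightarrow> poly (map_poly f p) w = 0"
    using w map_poly_polys_over[where f = f, OF field_emb_0[OF f] p] unfolding algebraic_over_def by auto
  finally show "poly p z = 0 \<longleftrightarrow> poly (map_poly f p) w = 0" .
qed

lemma conjugate_over_root_of_min_poly:
  assumes f: "field_emb K f" and mp: "is_min_poly K z m" and w: "poly (map_poly f m) w = 0"
  shows "conjugate_over K f z w"
  unfolding conjugate_over_def
proof
  have K: "subfield K" using field_emb_subfield[OF f] .
  have m: "m \<in> polys_over K" using mp unfolding is_min_poly_def by auto
  have fwd: "poly (map_poly f p) w = 0" if p: "p \<in> polys_over K" "poly p z = 0" for p
  proof -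
    obtain s where s: "s \<in> polys_over K" "p = s * m" using min_poly_dvd[OF K mp p] by blast
    show ?thesis using s w map_poly_mult_field_emb[OF f s(1) m] by simp
  qed
  fix p assume p: "p \<in> polys_over K"
  show "poly p z = 0 \<longleftrightarrow> poly (map_poly f p) w = 0"
  proof
    assume "poly p z = 0" then show "poly (map_poly f p) w = 0" using fwd p by blast
  next
    assume h: "poly (map_poly f p) w = 0"
    show "poly p z = 0"
    proof (rule ccontr)
      assume "poly p z \<noteq> 0"
      then obtain a where a: "a \<in> polys_over K" "poly a z * poly p z = 1"
        using min_poly_inverse[OF K mp p] by blast
      have ap: "a * p - 1 \<in> polys_over K" using a p by (simp add: K polys_over_diff polys_over_mult polys_over_1)
      have "poly (a * p - 1) z = 0" using a by simp
      hence "poly (map_poly f (a * p - 1)) w = 0" using fwd ap by blast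
      hence "poly (map_poly f a) w * poly (map_poly f p) w = 1"
        using map_poly_diff_on[OF K field_emb_additive[OF f] polys_over_mult[OF K a(1) p] polys_over_1[OF K]]
          map_poly_mult_field_emb[OF f a(1) p] field_emb_1[OF f] by simp
      thus False using h by simp
    qed
  qed
qed

definition derivation_compatible :: "'a::field set \<Rightarrow> ('a \<Rightarrow> 'a) \<Rightarrow> 'a \<Rightarrow> 'a \<Rightarrow> bool" where
  "derivation_compatible K D z w \<longleftrightarrow> (\<forall>p\<in>polys_over K. poly p z = 0 \<longrightarrow> poly_der D z w p = 0)"

definition extend_der :: "'a::field set \<Rightarrow> ('a \<Rightarrow> 'a) \<Rightarrow> 'a \<Rightarrow> 'a \<Rightarrow> 'a \<Rightarrow> 'a" where
  "extend_der K D z w x = (case frac_rep K z x of (p, q) \<Rightarrow>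
     (poly_der D z w p * poly q z - poly p z * poly_der D z w q) / (poly q z)\<^sup>2)"

lemma quotient_rule_well_defined:
  fixes X Y U V a b c d :: "'a::field"
  assumes "Y \<noteq> 0" "V \<noteq> 0" "X * V = U * Y" "a * V + X * d = c * Y + U * b"
  shows "(a * Y - X * b) / Y\<^sup>2 = (c * V - U * d) / V\<^sup>2"
proof -
  have "a * V - U * b = c * Y - X * d" using assms(4) by (simp add: algebra_simps)
  hence "V * (a * V - U * b) = V * (c * Y - X * d)" by simp
  also have "\<dots> = Y * (c * V - U * d)" using assms(3) by (simp add: algebra_simps)
  finally have e: "V * (a * V - U * b) = Y * (c * V - U * d)" .
  have "(a * Y - X * b) * V\<^sup>2 = a * Y * V * V - (X * V) * b * V" by (simp add: power2_eq_square algebra_simps)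
  also have "\<dots> = a * Y * V * V - (U * Y) * b * V" using assms(3) by simp
  also have "\<dots> = Y * (V * (a * V - U * b))" by (simp add: algebra_simps)
  also have "\<dots> = Y * (Y * (c * V - U * d))" using e by simp
  also have "\<dots> = (c * V - U * d) * Y\<^sup>2" by (simp add: power2_eq_square algebra_simps)
  finally show ?thesis using assms(1,2) by (simp add: field_simps)
qed

lemma extend_der_eq:
  assumes D: "derivation_on K D" and C: "derivation_compatible K D z w"
    and pq: "p \<in> polys_over K" "q \<in> polys_over K" "poly q z \<noteq> 0"
  shows "extend_der K D z w (poly p z / poly q z)
    = (poly_der D z w p * poly q z - poly p z * poly_der D z w q) / (poly q z)\<^sup>2"
proof -
  have K: "subfield K" using derivation_subfield[OF D] .
  define x where "x = poly p z / poly q z"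
  obtain p' q' where pq': "frac_rep K z x = (p', q')" by fastforce
  note r = frac_rep[OF adjoinI[OF pq, folded x_def] pq']
  have e1: "poly p z * poly q' z = poly p' z * poly q z" using r pq(3) unfolding x_def by (simp add: field_simps)
  have "poly (p * q' - p' * q) z = 0" using e1 by simp
  moreover have "p * q' - p' * q \<in> polys_over K" using r pq by (simp add: K polys_over_diff polys_over_mult)
  ultimately have "poly_der D z w (p * q' - p' * q) = 0" using C unfolding derivation_compatible_def by blast
  then have "poly_der D z w (p * q') = poly_der D z w (p' * q)"
    using poly_der_diff[OF D polys_over_mult[OF K pq(1) r(2)] polys_over_mult[OF K r(1) pq(2)]] by simp
  then have e2: "poly_der D z w p * poly q' z + poly p z * poly_der D z w q'
      = poly_der D z w p' * poly q z + poly p' z * poly_der D z w q"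
    using poly_der_mult[OF D pq(1) r(2)] poly_der_mult[OF D r(1) pq(2)] by simp
  have "extend_der K D z w x = (poly_der D z w p' * poly q' z - poly p' z * poly_der D z w q') / (poly q' z)\<^sup>2"
    unfolding extend_der_def pq' by simp
  also have "\<dots> = (poly_der D z w p * poly q z - poly p z * poly_der D z w q) / (poly q z)\<^sup>2"
    by (rule quotient_rule_well_defined[symmetric]) (use pq(3) r(3) e1 e2 in auto)
  finally show ?thesis unfolding x_def .
qed

lemma derivation_extend_der:
  assumes D: "derivation_on K D" and C: "derivation_compatible K D z w"
  shows "derivation_on (adjoin K z) (extend_der K D z w)"
proof -
  have K: "subfield K" using derivation_subfield[OF D] .
  note EQ = extend_der_eq[OF D C]
  show ?thesis unfolding derivation_on_def
  proof (intro conjI ballI)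
    show "subfield (adjoin K z)" using subfield_adjoin[OF K] .
    fix x y assume "x \<in> adjoin K z" "y \<in> adjoin K z"
    then obtain p1 q1 p2 q2 where 1: "p1 \<in> polys_over K" "q1 \<in> polys_over K" "poly q1 z \<noteq> 0" "x = poly p1 z / poly q1 z"
      and 2: "p2 \<in> polys_over K" "q2 \<in> polys_over K" "poly q2 z \<noteq> 0" "y = poly p2 z / poly q2 z"
      by (metis adjoinE)
    define X1 Y1 X2 Y2 where "X1 = poly p1 z" "Y1 = poly q1 z" "X2 = poly p2 z" "Y2 = poly q2 z"
    define a1 b1 a2 b2 where "a1 = poly_der D z w p1" "b1 = poly_der D z w q1"
      "a2 = poly_der D z w p2" "b2 = poly_der D z w q2"
    note defs = X1_Y1_X2_Y2_def a1_b1_a2_b2_def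
    have Y: "Y1 \<noteq> 0" "Y2 \<noteq> 0" using 1 2 unfolding defs by auto
    have Dx: "extend_der K D z w x = (a1 * Y1 - X1 * b1) / Y1\<^sup>2" using EQ[OF 1(1-3)] 1(4) unfolding defs by simp
    have Dy: "extend_der K D z w y = (a2 * Y2 - X2 * b2) / Y2\<^sup>2" using EQ[OF 2(1-3)] 2(4) unfolding defs by simp
    have ps: "p1 * q2 + p2 * q1 \<in> polys_over K" "q1 * q2 \<in> polys_over K" "p1 * p2 \<in> polys_over K"
      using 1 2 by (auto simp: K polys_over_add polys_over_mult)
    have dlq: "poly_der D z w (q1 * q2) = b1 * Y2 + Y1 * b2"
      using poly_der_mult[OF D 1(2) 2(2)] unfolding defs by simp
    have dls: "poly_der D z w (p1 * q2 + p2 * q1) = a1 * Y2 + X1 * b2 + (a2 * Y1 + X2 * b1)"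
      using poly_der_add[OF D polys_over_mult[OF K 1(1) 2(2)] polys_over_mult[OF K 2(1) 1(2)]]
        poly_der_mult[OF D 1(1) 2(2)] poly_der_mult[OF D 2(1) 1(2)]
      unfolding defs by simp
    have "x + y = poly (p1 * q2 + p2 * q1) z / poly (q1 * q2) z"
      using 1(3) 2(3) unfolding 1(4) 2(4) by (simp add: field_simps)
    then have "extend_der K D z w (x + y)
        = ((a1 * Y2 + X1 * b2 + (a2 * Y1 + X2 * b1)) * (Y1 * Y2) - (X1 * Y2 + X2 * Y1) * (b1 * Y2 + Y1 * b2)) / (Y1 * Y2)\<^sup>2"
      using EQ[OF ps(1,2)] 1(3) 2(3) unfolding dls dlq by (simp add: defs)
    also have "\<dots> = extend_der K D z w x + extend_der K D z w y"
      unfolding Dx Dy using Y by (simp add: field_simps power2_eq_square)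
    finally show "extend_der K D z w (x + y) = extend_der K D z w x + extend_der K D z w y" .
    have dlm: "poly_der D z w (p1 * p2) = a1 * X2 + X1 * a2"
      using poly_der_mult[OF D 1(1) 2(1)] unfolding defs by simp
    have "x * y = poly (p1 * p2) z / poly (q1 * q2) z" unfolding 1(4) 2(4) by simp
    then have "extend_der K D z w (x * y)
        = ((a1 * X2 + X1 * a2) * (Y1 * Y2) - (X1 * X2) * (b1 * Y2 + Y1 * b2)) / (Y1 * Y2)\<^sup>2"
      using EQ[OF ps(3,2)] 1(3) 2(3) unfolding dlm dlq by (simp add: defs)
    also have "\<dots> = x * extend_der K D z w y + y * extend_der K D z w x"
      unfolding Dx Dy unfolding 1(4) 2(4) defs(1-4)[symmetric] using Y by (simp add: field_simps power2_eq_square)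
    finally show "extend_der K D z w (x * y) = x * extend_der K D z w y + y * extend_der K D z w x" .
  qed
qed

lemma extend_der_base:
  assumes D: "derivation_on K D" and C: "derivation_compatible K D z w" and x: "x \<in> K"
  shows "extend_der K D z w x = D x"
  using extend_der_eq[OF D C polys_over_const polys_over_1, of x] derivation_subfield[OF D] x
  by (simp add: poly_der_const[OF D] poly_der_1[OF D])

lemma extend_der_generator:
  assumes D: "derivation_on K D" and C: "derivation_compatible K D z w"
  shows "extend_der K D z w z = w"
  using extend_der_eq[OF D C polys_over_X polys_over_1] derivation_subfield[OF D]
  by (simp add: poly_der_X[OF D] poly_der_1[OF D])

lemma derivation_compatible_transcendental:
  "\<not> algebraic_over K z \<Longrightarrow> derivation_compatible K D z w"
  unfolding derivation_compatible_def algebraic_over_def poly_der_def by auto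

text \<open>At an algebraic \<open>z\<close> the value \<open>w\<close> is forced by differentiating \<open>m(z) = 0\<close>; this is where
  characteristic zero (separability of \<open>m\<close>) enters.\<close>

lemma derivation_compatible_algebraic:
  fixes K :: "'a::field_char_0 set"
  assumes D: "derivation_on K D" and mp: "is_min_poly K z m"
  shows "derivation_compatible K D z (- poly (map_poly D m) z / poly (pderiv m) z)"
  unfolding derivation_compatible_def
proof (intro ballI impI)
  have K: "subfield K" using derivation_subfield[OF D] .
  define w where "w = - poly (map_poly D m) z / poly (pderiv m) z"
  have m: "m \<in> polys_over K" "poly m z = 0" using mp unfolding is_min_poly_def by auto
  have dm: "poly_der D z w m = 0" unfolding poly_der_def w_def using min_poly_pderiv_nonzero[OF K mp] by simp
  fix p assume "p \<in> polys_over K" "poly p z = 0"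
  then obtain s where s: "s \<in> polys_over K" "p = s * m" using min_poly_dvd[OF K mp] by blast
  show "poly_der D z w p = 0" using poly_der_mult[OF D s(1) m(1)] s(2) dm m(2) by simp
qed

section \<open>Extending to the whole field by Zorn's lemma\<close>

text \<open>Partial maps are handled through their graphs, so that chains are ordered by inclusion.\<close>

definition graph_on :: "'a set \<Rightarrow> ('a \<Rightarrow> 'b) \<Rightarrow> ('a \<times> 'b) set" where
  "graph_on K f = {(x, f x) | x. x \<in> K}"

definition graph_fun :: "('a \<times> 'b) set \<Rightarrow> 'a \<Rightarrow> 'b" where
  "graph_fun G x = (SOME y. (x, y) \<in> G)"

lemma graph_fun_in: "(x, y) \<in> G \<Longrightarrow> (x, graph_fun G x) \<in> G"
  unfolding graph_fun_def by (rule someI)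

lemma graph_fun_eq: "single_valued G \<Longrightarrow> (x, y) \<in> G \<Longrightarrow> graph_fun G x = y"
  using graph_fun_in single_valuedD by fastforce

lemma single_valued_graph_on: "single_valued (graph_on K f)"
  by (rule single_valuedI) (simp add: graph_on_def)

lemma Domain_graph_on [simp]: "Domain (graph_on K f) = K"
  unfolding graph_on_def by blast

lemma graph_fun_graph_on: "x \<in> K \<Longrightarrow> graph_fun (graph_on K f) x = f x"
  by (rule graph_fun_eq[OF single_valued_graph_on]) (simp add: graph_on_def)

lemma subset_graph_on:
  assumes "single_valued M" "Domain M \<subseteq> L" "\<And>x. x \<in> Domain M \<Longrightarrow> g x = graph_fun M x"
  shows "M \<subseteq> graph_on L g"
proof
  fix p assume "p \<in> M"
  then obtain x y where p: "p = (x, y)" "(x, y) \<in> M" by (cases p) auto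
  then have "x \<in> Domain M" "g x = y" using assms(3) graph_fun_eq[OF assms(1)] by auto
  then show "p \<in> graph_on L g" using assms(2) p unfolding graph_on_def by auto
qed

lemma single_valued_chain_Union:
  assumes "chain\<^sub>\<subseteq> C" "\<forall>G\<in>C. single_valued G" shows "single_valued (\<Union>C)"
proof (rule single_valuedI)
  fix x y z assume "(x, y) \<in> \<Union>C" "(x, z) \<in> \<Union>C"
  then obtain G1 G2 where G: "G1 \<in> C" "G2 \<in> C" "(x, y) \<in> G1" "(x, z) \<in> G2" by blast
  then have "(x, y) \<in> G1 \<and> (x, z) \<in> G1 \<or> (x, y) \<in> G2 \<and> (x, z) \<in> G2"
    using assms(1) unfolding chain_subset_def by blast
  then show "y = z" using G(1,2) assms(2) single_valuedD by metis
qed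

lemma graph_fun_chain:
  assumes "chain\<^sub>\<subseteq> C" "\<forall>G\<in>C. single_valued G" "G \<in> C" "x \<in> Domain G"
  shows "graph_fun (\<Union>C) x = graph_fun G x"
  using graph_fun_eq[OF single_valued_chain_Union[OF assms(1,2)]] graph_fun_in[of x _ G] assms(4) assms(3) by blast

lemma chain_Domain_two:
  assumes "chain\<^sub>\<subseteq> C" "x \<in> Domain (\<Union>C)" "y \<in> Domain (\<Union>C)"
  obtains G where "G \<in> C" "x \<in> Domain G" "y \<in> Domain G"
proof -
  obtain G1 G2 where "G1 \<in> C" "G2 \<in> C" "x \<in> Domain G1" "y \<in> Domain G2" using assms(2,3) by blast
  then have "x \<in> Domain G1 \<and> y \<in> Domain G1 \<or> x \<in> Domain G2 \<and> y \<in> Domain G2"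
    using assms(1) Domain_mono unfolding chain_subset_def by blast
  then show ?thesis using that \<open>G1 \<in> C\<close> \<open>G2 \<in> C\<close> by blast
qed

definition partial_emb :: "('a::field \<times> 'a) set \<Rightarrow> bool" where
  "partial_emb G \<longleftrightarrow> single_valued G \<and> field_emb (Domain G) (graph_fun G)"

definition partial_der :: "('a::field \<times> 'a) set \<Rightarrow> bool" where
  "partial_der G \<longleftrightarrow> single_valued G \<and> derivation_on (Domain G) (graph_fun G)"

lemma partial_emb_graph_on: "field_emb K f \<Longrightarrow> partial_emb (graph_on K f)"
  unfolding partial_emb_def by (auto intro: single_valued_graph_on field_emb_cong simp: graph_fun_graph_on)

lemma partial_der_graph_on: "derivation_on K D \<Longrightarrow> partial_der (graph_on K D)"
  unfolding partial_der_def by (auto intro: single_valued_graph_on derivation_cong simp: graph_fun_graph_on)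

text \<open>The operations of a subfield involve at most two elements, and any two elements of the union
  of a chain already lie in one of its members.\<close>

lemma subfield_chain_Union_Domain:
  assumes C: "chain\<^sub>\<subseteq> C" "C \<noteq> {}" "\<forall>G\<in>C. subfield (Domain G)"
  shows "subfield (Domain (\<Union>C))"
  unfolding subfield_def
proof (intro conjI ballI)
  obtain G0 where G0: "G0 \<in> C" using C(2) by blast
  then have "subfield (Domain G0)" using C(3) by blast
  then have "0 \<in> Domain G0" "1 \<in> Domain G0" using subfield_0 subfield_1 by blast+
  then show "0 \<in> Domain (\<Union>C)" "1 \<in> Domain (\<Union>C)" using G0 Domain_mono[of G0 "\<Union>C"] by auto
next
  fix x y assume "x \<in> Domain (\<Union>C)" "y \<in> Domain (\<Union>C)"
  then obtain G where G: "G \<in> C" "x \<in> Domain G" "y \<in> Domain G" using chain_Domain_two[OF C(1)] by blast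
  have "subfield (Domain G)" using C(3) G(1) by blast
  then have "x + y \<in> Domain G" "x * y \<in> Domain G" using subfield_add subfield_mult G(2,3) by blast+
  then show "x + y \<in> Domain (\<Union>C)" "x * y \<in> Domain (\<Union>C)" using G(1) Domain_mono[of G "\<Union>C"] by auto
next
  fix x assume "x \<in> Domain (\<Union>C)"
  then obtain G where G: "G \<in> C" "x \<in> Domain G" by blast
  have "subfield (Domain G)" using C(3) G(1) by blast
  then have "- x \<in> Domain G" "inverse x \<in> Domain G" using subfield_uminus subfield_inverse G(2) by blast+
  then show "- x \<in> Domain (\<Union>C)" "inverse x \<in> Domain (\<Union>C)" using G(1) Domain_mono[of G "\<Union>C"] by auto
qed

lemma partial_emb_chain_Union:
  assumes C: "chain\<^sub>\<subseteq> C" "C \<noteq> {}" "\<forall>G\<in>C. partial_emb G"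
  shows "partial_emb (\<Union>C)"
proof -
  have sv: "\<forall>G\<in>C. single_valued G" using C(3) unfolding partial_emb_def by blast
  have emb: "field_emb (Domain G) (graph_fun G)" if "G \<in> C" for G using C(3) that unfolding partial_emb_def by blast
  note same = graph_fun_chain[OF C(1) sv]
  obtain G0 where G0: "G0 \<in> C" using C(2) by blast
  have "graph_fun (\<Union>C) 1 = 1"
    using same[OF G0] field_emb_1[OF emb[OF G0]] subfield_1[OF field_emb_subfield[OF emb[OF G0]]] by simp
  moreover have "graph_fun (\<Union>C) (x + y) = graph_fun (\<Union>C) x + graph_fun (\<Union>C) y"
    "graph_fun (\<Union>C) (x * y) = graph_fun (\<Union>C) x * graph_fun (\<Union>C) y"
    if xy: "x \<in> Domain (\<Union>C)" "y \<in> Domain (\<Union>C)" for x y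
  proof -
    obtain G where G: "G \<in> C" "x \<in> Domain G" "y \<in> Domain G" using chain_Domain_two[OF C(1) xy] by blast
    have "x + y \<in> Domain G" "x * y \<in> Domain G"
      using subfield_add[OF _ G(2,3)] subfield_mult[OF _ G(2,3)] field_emb_subfield[OF emb[OF G(1)]] by blast+
    then show "graph_fun (\<Union>C) (x + y) = graph_fun (\<Union>C) x + graph_fun (\<Union>C) y"
      "graph_fun (\<Union>C) (x * y) = graph_fun (\<Union>C) x * graph_fun (\<Union>C) y"
      using same[OF G(1)] G field_emb_add[OF emb[OF G(1)]] field_emb_mult[OF emb[OF G(1)]] by simp_all
  qed
  moreover have "subfield (Domain (\<Union>C))"
    using subfield_chain_Union_Domain[OF C(1,2)] emb field_emb_subfield by blast
  ultimately show ?thesis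
    using single_valued_chain_Union[OF C(1) sv] unfolding partial_emb_def field_emb_def by blast
qed

lemma partial_der_chain_Union:
  assumes C: "chain\<^sub>\<subseteq> C" "C \<noteq> {}" "\<forall>G\<in>C. partial_der G"
  shows "partial_der (\<Union>C)"
proof -
  have sv: "\<forall>G\<in>C. single_valued G" using C(3) unfolding partial_der_def by blast
  have der: "derivation_on (Domain G) (graph_fun G)" if "G \<in> C" for G
    using C(3) that unfolding partial_der_def by blast
  note same = graph_fun_chain[OF C(1) sv]
  have "graph_fun (\<Union>C) (x + y) = graph_fun (\<Union>C) x + graph_fun (\<Union>C) y"
    "graph_fun (\<Union>C) (x * y) = x * graph_fun (\<Union>C) y + y * graph_fun (\<Union>C) x"
    if xy: "x \<in> Domain (\<Union>C)" "y \<in> Domain (\<Union>C)" for x y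
  proof -
    obtain G where G: "G \<in> C" "x \<in> Domain G" "y \<in> Domain G" using chain_Domain_two[OF C(1) xy] by blast
    have "x + y \<in> Domain G" "x * y \<in> Domain G"
      using subfield_add[OF _ G(2,3)] subfield_mult[OF _ G(2,3)] derivation_subfield[OF der[OF G(1)]] by blast+
    then show "graph_fun (\<Union>C) (x + y) = graph_fun (\<Union>C) x + graph_fun (\<Union>C) y"
      "graph_fun (\<Union>C) (x * y) = x * graph_fun (\<Union>C) y + y * graph_fun (\<Union>C) x"
      using same[OF G(1)] G derivation_add[OF der[OF G(1)]] derivation_mult[OF der[OF G(1)]] by simp_all
  qed
  moreover have "subfield (Domain (\<Union>C))"
    using subfield_chain_Union_Domain[OF C(1,2)] der derivation_subfield by blast
  ultimately show ?thesis
    using single_valued_chain_Union[OF C(1) sv] unfolding partial_der_def derivation_on_def by blast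
qed

lemma Zorn_extension:
  assumes "P G0" and "\<And>C. chain\<^sub>\<subseteq> C \<Longrightarrow> C \<noteq> {} \<Longrightarrow> \<forall>G\<in>C. P G \<Longrightarrow> P (\<Union>C)"
  obtains M where "P M" "G0 \<subseteq> M" "\<And>X. P X \<Longrightarrow> M \<subseteq> X \<Longrightarrow> X = M"
proof -
  define A where "A = {G. P G \<and> G0 \<subseteq> G}"
  have "\<exists>U\<in>A. \<forall>X\<in>C. X \<subseteq> U" if C: "C \<in> chains A" for C
  proof (cases "C = {}")
    case True
    then show ?thesis using assms(1) unfolding A_def by auto
  next
    case False
    have ch: "chain\<^sub>\<subseteq> C" "\<forall>G\<in>C. P G \<and> G0 \<subseteq> G" using C unfolding chains_def A_def by auto
    have "P (\<Union>C)" using assms(2)[OF ch(1) False] ch(2) by blast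
    moreover have "G0 \<subseteq> \<Union>C" using False ch(2) by blast
    ultimately show ?thesis unfolding A_def by (intro bexI[of _ "\<Union>C"]) auto
  qed
  then obtain M where "M \<in> A" "\<forall>X\<in>A. M \<subseteq> X \<longrightarrow> X = M" using Zorn_Lemma2[of A] by blast
  then show ?thesis using that unfolding A_def by auto
qed

lemma maximal_graph_Domain:
  assumes M: "single_valued M" "subfield (Domain M)" "\<And>X. P X \<Longrightarrow> M \<subseteq> X \<Longrightarrow> X = M"
    and ext: "P (graph_on (adjoin (Domain M) z) g)" "\<And>x. x \<in> Domain M \<Longrightarrow> g x = graph_fun M x"
  shows "z \<in> Domain M"
proof -
  have "Domain M \<subseteq> adjoin (Domain M) z" using adjoin_base[OF M(2)] by blast
  then have "graph_on (adjoin (Domain M) z) g = M" using M(3)[OF ext(1) subset_graph_on[OF M(1) _ ext(2)]] by blast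
  moreover have "z \<in> Domain (graph_on (adjoin (Domain M) z) g)" using adjoin_generator[OF M(2)] by simp
  ultimately show ?thesis by simp
qed

lemma graph_fun_extends:
  assumes "single_valued M" "graph_on K f \<subseteq> M" "x \<in> K" shows "graph_fun M x = f x"
proof -
  have "(x, f x) \<in> M" using assms(2,3) unfolding graph_on_def by blast
  then show ?thesis using graph_fun_eq[OF assms(1)] by blast
qed

theorem derivation_extends_to_UNIV:
  fixes K0 :: "'a::field_char_0 set"
  assumes D0: "derivation_on K0 D0"
  obtains D where "derivation_on UNIV D" "\<And>x. x \<in> K0 \<Longrightarrow> D x = D0 x"
proof -
  obtain M where M: "partial_der M" "graph_on K0 D0 \<subseteq> M" "\<And>X. partial_der X \<Longrightarrow> M \<subseteq> X \<Longrightarrow> X = M"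
    using Zorn_extension[of partial_der, OF partial_der_graph_on[OF D0] partial_der_chain_Union] by blast
  define K D where "K = Domain M" and "D = graph_fun M"
  have sv: "single_valued M" and der: "derivation_on K D" using M(1) unfolding partial_der_def K_def D_def by auto
  have "z \<in> K" for z
  proof -
    obtain w where C: "derivation_compatible K D z w"
    proof (cases "algebraic_over K z")
      case True
      then obtain m where "is_min_poly K z m" using min_poly_exists by blast
      from derivation_compatible_algebraic[OF der this] that show ?thesis by blast
    qed (use derivation_compatible_transcendental that in blast)
    show ?thesis unfolding K_def
    proof (rule maximal_graph_Domain[OF sv _ M(3)])
      show "subfield (Domain M)" using derivation_subfield[OF der] unfolding K_def .
      show "partial_der (graph_on (adjoin (Domain M) z) (extend_der K D z w))"
        using partial_der_graph_on[OF derivation_extend_der[OF der C]] unfolding K_def .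
      show "extend_der K D z w x = graph_fun M x" if "x \<in> Domain M" for x
        using extend_der_base[OF der C] that unfolding K_def D_def by blast
    qed
  qed
  then have "K = UNIV" by blast
  then show ?thesis using that der graph_fun_extends[OF sv M(2)] unfolding D_def K_def by simp
qed

section \<open>Derivations and automorphisms of the complex field\<close>

lemma map_poly_min_poly_has_root:
  fixes K :: "complex set"
  assumes f: "field_emb K f" and mp: "is_min_poly K z m" shows "\<exists>w. poly (map_poly f m) w = 0"
proof -
  have m: "m \<in> polys_over K" "m \<noteq> 0" using mp unfolding is_min_poly_def by auto
  have "f (lead_coeff m) \<noteq> 0" using field_emb_nonzero[OF f polys_over_coeff[OF m(1)]] m(2) by simp
  hence "degree (map_poly f m) = degree m" by (rule map_poly_degree_eq)
  hence "\<not> constant (poly (map_poly f m))" using min_poly_degree_pos[OF mp] by (simp add: constant_degree)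
  then show ?thesis by (rule fundamental_theorem_of_algebra)
qed

lemma root_of_map_poly_in_image:
  fixes \<psi> :: "complex \<Rightarrow> complex"
  assumes \<psi>: "field_emb UNIV \<psi>"
  shows "p \<noteq> 0 \<Longrightarrow> poly (map_poly \<psi> p) y = 0 \<Longrightarrow> \<exists>r. poly p r = 0 \<and> \<psi> r = y"
proof (induction "degree p" arbitrary: p rule: less_induct)
  case less
  show ?case
  proof (cases "degree p = 0")
    case True
    then obtain c where c: "p = [:c:]" by (metis degree_eq_zeroE)
    have "\<psi> c \<noteq> 0" using less.prems c field_emb_nonzero[OF \<psi>] by simp
    then show ?thesis using less.prems c by (simp add: map_poly_pCons field_emb_UNIV[OF \<psi>])
  next
    case False
    then have "\<not> constant (poly p)" by (simp add: constant_degree)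
    then obtain r where r: "poly p r = 0" using fundamental_theorem_of_algebra by blast
    then obtain q where q: "p = [:-r, 1:] * q" using poly_eq_0_iff_dvd by (metis dvdE)
    have q0: "q \<noteq> 0" using less.prems q by auto
    have "degree p = degree [:-r, 1:] + degree q" unfolding q by (rule degree_mult_eq) (use q0 in auto)
    then have dq: "degree q < degree p" by simp
    have "map_poly \<psi> p = [:- \<psi> r, 1:] * map_poly \<psi> q"
      unfolding q map_poly_mult_field_emb[OF \<psi>, simplified]
      by (simp add: map_poly_pCons field_emb_UNIV[OF \<psi>])
    then have "y = \<psi> r \<or> poly (map_poly \<psi> q) y = 0" using less.prems(2) by auto
    then show ?thesis using r q less.hyps[OF dq q0] by auto
  qed
qed

lemma surj_field_emb_UNIV:
  fixes \<psi> :: "complex \<Rightarrow> complex"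
  assumes \<psi>: "field_emb UNIV \<psi>" and K: "\<psi> ` K = K" "subfield K" and alg: "\<And>z. algebraic_over K z"
  shows "surj \<psi>"
proof -
  have "y \<in> range \<psi>" for y
  proof -
    obtain q where q: "q \<in> polys_over K" "q \<noteq> 0" "poly q y = 0" using alg[of y] unfolding algebraic_over_def by blast
    have emb: "field_emb K \<psi>" using \<psi> K(2) unfolding field_emb_def by blast
    obtain p where p: "p \<in> polys_over K" "map_poly \<psi> p = q" using map_poly_field_emb_surj[OF emb] q(1) K(1) by auto
    then have "p \<noteq> 0" using q(2) by auto
    then show ?thesis using root_of_map_poly_in_image[OF \<psi>] p(2) q(3) by blast
  qed
  then show ?thesis by blast
qed

theorem field_emb_extends_to_UNIV:
  fixes K0 :: "complex set"
  assumes f0: "field_emb K0 f0" and alg: "\<And>z. algebraic_over K0 z"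
  obtains \<psi> where "field_emb UNIV \<psi>" "\<And>x. x \<in> K0 \<Longrightarrow> \<psi> x = f0 x"
proof -
  obtain M where M: "partial_emb M" "graph_on K0 f0 \<subseteq> M" "\<And>X. partial_emb X \<Longrightarrow> M \<subseteq> X \<Longrightarrow> X = M"
    using Zorn_extension[of partial_emb, OF partial_emb_graph_on[OF f0] partial_emb_chain_Union] by blast
  define K \<psi> where "K = Domain M" and "\<psi> = graph_fun M"
  have sv: "single_valued M" and emb: "field_emb K \<psi>" using M(1) unfolding partial_emb_def K_def \<psi>_def by auto
  have "K0 \<subseteq> K" using M(2) unfolding K_def graph_on_def by blast
  have "z \<in> K" for z
  proof -
    obtain m where m: "is_min_poly K z m" using min_poly_exists algebraic_over_mono[OF \<open>K0 \<subseteq> K\<close> alg] by blast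
    obtain w where "poly (map_poly \<psi> m) w = 0" using map_poly_min_poly_has_root[OF emb m] by blast
    then have C: "conjugate_over K \<psi> z w" using conjugate_over_root_of_min_poly[OF emb m] by blast
    show ?thesis unfolding K_def
    proof (rule maximal_graph_Domain[OF sv _ M(3)])
      show "subfield (Domain M)" using field_emb_subfield[OF emb] unfolding K_def .
      show "partial_emb (graph_on (adjoin (Domain M) z) (extend_emb K \<psi> z w))"
        using partial_emb_graph_on[OF field_emb_extend_emb[OF emb C]] unfolding K_def .
      show "extend_emb K \<psi> z w x = graph_fun M x" if "x \<in> Domain M" for x
        using extend_emb_base[OF emb C] that unfolding K_def \<psi>_def by blast
    qed
  qed
  then have "K = UNIV" by blast
  then show ?thesis using that emb graph_fun_extends[OF sv M(2)] unfolding \<psi>_def K_def by simp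
qed

definition partial_aut :: "(complex \<times> complex) set \<Rightarrow> bool" where
  "partial_aut G \<longleftrightarrow> partial_emb G \<and> graph_fun G ` Domain G = Domain G"

lemma partial_aut_chain_Union:
  assumes C: "chain\<^sub>\<subseteq> C" "C \<noteq> {}" "\<forall>G\<in>C. partial_aut G"
  shows "partial_aut (\<Union>C)"
proof -
  have sv: "\<forall>G\<in>C. single_valued G" using C(3) unfolding partial_aut_def partial_emb_def by blast
  have "graph_fun (\<Union>C) ` Domain (\<Union>C) = (\<Union>G\<in>C. graph_fun (\<Union>C) ` Domain G)"
    by (simp add: Domain_Union image_UN)
  also have "\<dots> = (\<Union>G\<in>C. graph_fun G ` Domain G)"
    using graph_fun_chain[OF C(1) sv] by (intro SUP_cong refl image_cong) auto
  also have "\<dots> = Domain (\<Union>C)" using C(3) unfolding partial_aut_def by (simp add: Domain_Union)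
  finally show ?thesis
    using partial_emb_chain_Union[OF C(1,2)] C(3) unfolding partial_aut_def by blast
qed

text \<open>A maximal extension to an automorphism of a subfield \<open>K\<close> leaves no element transcendental
  over \<open>K\<close> (such a \<open>z\<close> could be adjoined with \<open>z \<mapsto> z\<close>), and any embedding of \<open>\<complex>\<close>
  extending it is then onto.\<close>

theorem field_aut_extends_to_UNIV:
  fixes K0 :: "complex set"
  assumes f0: "field_emb K0 f0" and im: "f0 ` K0 = K0"
  obtains \<phi> where "field_emb UNIV \<phi>" "surj \<phi>" "\<And>x. x \<in> K0 \<Longrightarrow> \<phi> x = f0 x"
proof -
  have "graph_fun (graph_on K0 f0) ` K0 = f0 ` K0" by (rule image_cong[OF refl graph_fun_graph_on])
  then have "partial_aut (graph_on K0 f0)"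
    using partial_emb_graph_on[OF f0] im unfolding partial_aut_def by simp
  then obtain M where M: "partial_aut M" "graph_on K0 f0 \<subseteq> M" "\<And>X. partial_aut X \<Longrightarrow> M \<subseteq> X \<Longrightarrow> X = M"
    using Zorn_extension[of partial_aut, OF _ partial_aut_chain_Union] by blast
  define K f where "K = Domain M" and "f = graph_fun M"
  have sv: "single_valued M" and emb: "field_emb K f" and imK: "f ` K = K"
    using M(1) unfolding partial_aut_def partial_emb_def K_def f_def by auto
  have Ksub: "subfield K" using field_emb_subfield[OF emb] .
  have alg: "algebraic_over K z" for z
  proof (rule ccontr)
    assume na: "\<not> algebraic_over K z"
    then have C: "conjugate_over K f z z" using conjugate_over_transcendental[OF emb na] imK by simp
    have "z \<in> K" unfolding K_def
    proof (rule maximal_graph_Domain[OF sv _ M(3)])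
      show "subfield (Domain M)" using Ksub unfolding K_def .
      have "graph_fun (graph_on (adjoin K z) (extend_emb K f z z)) ` adjoin K z = extend_emb K f z z ` adjoin K z"
        by (rule image_cong[OF refl graph_fun_graph_on])
      then have "graph_fun (graph_on (adjoin K z) (extend_emb K f z z)) ` adjoin K z = adjoin K z"
        using extend_emb_image[OF emb C] imK by simp
      then show "partial_aut (graph_on (adjoin (Domain M) z) (extend_emb K f z z))"
        using partial_emb_graph_on[OF field_emb_extend_emb[OF emb C]] unfolding partial_aut_def K_def by simp
      show "extend_emb K f z z x = graph_fun M x" if "x \<in> Domain M" for x
        using extend_emb_base[OF emb C] that unfolding K_def f_def by blast
    qed
    then show False using na algebraic_over_self[OF Ksub] by blast
  qed
  obtain \<phi> where \<phi>: "field_emb UNIV \<phi>" "\<And>x. x \<in> K \<Longrightarrow> \<phi> x = f x"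
    using field_emb_extends_to_UNIV[OF emb alg] by blast
  have "\<phi> ` K = K" using \<phi>(2) imK by simp
  then have "surj \<phi>" using surj_field_emb_UNIV[OF \<phi>(1) _ Ksub alg] by blast
  moreover have "\<phi> x = f0 x" if "x \<in> K0" for x
  proof -
    have "x \<in> K" using M(2) that unfolding K_def graph_on_def by fast
    then show ?thesis using \<phi>(2) graph_fun_extends[OF sv M(2) that] unfolding f_def by simp
  qed
  ultimately show ?thesis using that \<phi>(1) by blast
qed

lemma derivation_poly:
  assumes D: "derivation_on UNIV D"
  shows "D (poly p x) = poly (map_poly D p) x + poly (pderiv p) x * D x"
proof (induction p)
  case (pCons a p)
  have "D (poly (pCons a p) x) = D a + (x * D (poly p x) + poly p x * D x)" using derivation_UNIV[OF D] by simp
  then show ?case using pCons.IH derivation_UNIV(3)[OF D] by (simp add: map_poly_pCons pderiv_pCons algebra_simps)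
qed (simp add: derivation_UNIV[OF D])

lemma derivation_vanishes_on_algebraic:
  fixes K :: "'a::field_char_0 set"
  assumes D: "derivation_on UNIV D" and K: "subfield K" "\<And>x. x \<in> K \<Longrightarrow> D x = 0" and z: "algebraic_over K z"
  shows "D z = 0"
proof -
  obtain m where mp: "is_min_poly K z m" using min_poly_exists[OF z] by blast
  have m: "m \<in> polys_over K" "poly m z = 0" using mp unfolding is_min_poly_def by auto
  have "map_poly D m = 0"
    using m(1) K(2) by (intro poly_eqI) (simp add: coeff_map_poly polys_over_coeff derivation_UNIV[OF D])
  then have "poly (pderiv m) z * D z = 0" using derivation_poly[OF D, of m z] m(2) derivation_UNIV(3)[OF D] by simp
  then show ?thesis using min_poly_pderiv_nonzero[OF K(1) mp] by simp
qed

lemma derivation_sending_to_one: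
  fixes K :: "'a::field_char_0 set"
  assumes K: "subfield K" and \<alpha>: "\<not> algebraic_over K \<alpha>"
  obtains D where "derivation_on UNIV D" "D \<alpha> = 1"
proof -
  have D0: "derivation_on K (\<lambda>_. 0)" unfolding derivation_on_def using K by simp
  note C = derivation_compatible_transcendental[OF \<alpha>, of "\<lambda>_. 0" 1]
  obtain D where "derivation_on UNIV D" "\<And>x. x \<in> adjoin K \<alpha> \<Longrightarrow> D x = extend_der K (\<lambda>_. 0) \<alpha> 1 x"
    using derivation_extends_to_UNIV[OF derivation_extend_der[OF D0 C]] by blast
  then show ?thesis using that adjoin_generator[OF K] extend_der_generator[OF D0 C] by simp
qed

lemma aut_negating_transcendental:
  fixes K :: "complex set"
  assumes K: "subfield K" and \<alpha>: "\<not> algebraic_over K \<alpha>"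
  obtains \<tau> where "field_emb UNIV \<tau>" "surj \<tau>" "\<tau> \<alpha> = - \<alpha>" "\<And>x. x \<in> K \<Longrightarrow> \<tau> x = x"
proof -
  have id: "field_emb K id" using K unfolding field_emb_def by simp
  have "conjugate_over K id \<alpha> (- \<alpha>)"
    using conjugate_over_transcendental[OF id \<alpha>] \<alpha> algebraic_over_uminus_iff[OF K] by simp
  note C = this
  have "extend_emb K id \<alpha> (- \<alpha>) ` adjoin K \<alpha> = adjoin K \<alpha>"
    using extend_emb_image[OF id C] adjoin_uminus[OF K] by simp
  then obtain \<tau> where \<tau>: "field_emb UNIV \<tau>" "surj \<tau>" "\<And>x. x \<in> adjoin K \<alpha> \<Longrightarrow> \<tau> x = extend_emb K id \<alpha> (- \<alpha>) x"
    using field_aut_extends_to_UNIV[OF field_emb_extend_emb[OF id C]] by blast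
  then show ?thesis
    using that adjoin_generator[OF K] adjoin_base[OF K] extend_emb_generator[OF id C] extend_emb_base[OF id C]
    by simp
qed

lemma subfield_Rats: "subfield (\<rat> :: 'a::field_char_0 set)"
  unfolding subfield_def by (auto simp: Rats_add Rats_mult Rats_inverse)

lemma countable_polys_over_Rats: "countable (polys_over (\<rat> :: 'a::field_char_0 set))"
proof -
  have "polys_over \<rat> \<subseteq> range (\<lambda>l::rat list. Poly (map of_rat l) :: 'a poly)"
  proof
    fix p :: "'a poly" assume p: "p \<in> polys_over \<rat>"
    have "c = of_rat (SOME q. c = of_rat q)" if "c \<in> set (coeffs p)" for c
    proof -
      have "c \<in> \<rat>" using that p unfolding polys_over_def by (auto simp: coeffs_def split: if_splits)
      then obtain q where "c = of_rat q" by (auto elim: Rats_cases)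
      then show ?thesis by (rule someI)
    qed
    then have "map of_rat (map (\<lambda>c. SOME q. c = of_rat q) (coeffs p)) = coeffs p" by (simp add: map_idI)
    then show "p \<in> range (\<lambda>l::rat list. Poly (map of_rat l) :: 'a poly)" by (metis Poly_coeffs rangeI)
  qed
  then show ?thesis by (rule countable_subset) simp
qed

lemma exists_transcendental_over_Rats: "\<exists>\<alpha>::complex. \<not> algebraic_over \<rat> \<alpha>"
proof -
  have "{x :: complex. algebraic_over \<rat> x} = (\<Union>p\<in>polys_over \<rat> - {0}. {x. poly p x = 0})"
    unfolding algebraic_over_def by auto
  moreover have "countable (\<Union>p\<in>polys_over (\<rat> :: complex set) - {0}. {x. poly p x = 0})"
    using countable_polys_over_Rats by (intro countable_UN) (auto intro: countable_finite poly_roots_finite)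
  ultimately have "countable {x :: complex. algebraic_over \<rat> x}" by simp
  then have "{x :: complex. algebraic_over \<rat> x} \<noteq> UNIV" using uncountable_UNIV_complex by auto
  then show ?thesis by auto
qed

section \<open>Automorphisms of \<open>\<M>\<^sub>n\<close> and canonical parameters\<close>

definition is_automorphism :: "nat \<Rightarrow> (complex \<Rightarrow> complex) \<Rightarrow> (complex \<times> complex \<Rightarrow> complex \<times> complex) \<Rightarrow> bool" where
  "is_automorphism n sp ss \<longleftrightarrow> bij sp \<and> bij ss \<and> sp 0 = 0 \<and>
     (\<forall>a b. sp (a + b) = sp a + sp b) \<and> (\<forall>a b. sp (a * b) = sp a * sp b) \<and> (\<forall>a. sp (- a) = - sp a) \<and> sp 1 = 1 \<and>
     (\<forall>s. fst (ss s) = sp (fst s)) \<and>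
     (\<forall>s t. ss (fst s + fst t, snd s + snd t) = (fst (ss s) + fst (ss t), snd (ss s) + snd (ss t))) \<and>
     (\<forall>b s. ss (fst s, snd s + b) = (fst (ss s), snd (ss s) + sp b)) \<and>
     (\<forall>xs. Rn n (map ss xs) \<longleftrightarrow> Rn n xs)"

lemma evaluation_automorphism:
  assumes "is_automorphism n sp ss"
  shows "evp (sp \<circ> ep) (ss \<circ> es) t = sp (evp ep es t)" and "evs (sp \<circ> ep) (ss \<circ> es) s = ss (evs ep es s)"
proof (induct t and s)
  case (Proj s)
  have "fst (ss (evs ep es s)) = sp (fst (evs ep es s))" using assms unfolding is_automorphism_def by blast
  then show ?case using Proj by simp
next
  case (SPlus s t)
  have "ss (fst (evs ep es s) + fst (evs ep es t), snd (evs ep es s) + snd (evs ep es t))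
     = (fst (ss (evs ep es s)) + fst (ss (evs ep es t)), snd (ss (evs ep es s)) + snd (ss (evs ep es t)))"
    using assms unfolding is_automorphism_def by blast
  then show ?case using SPlus by simp
next
  case (Act b s)
  have "ss (fst (evs ep es s), snd (evs ep es s) + evp ep es b)
      = (fst (ss (evs ep es s)), snd (ss (evs ep es s)) + sp (evp ep es b))"
    using assms unfolding is_automorphism_def by blast
  then show ?case using Act by simp
qed (use assms in \<open>simp_all add: is_automorphism_def\<close>)

lemma fun_upd_comp_bij:
  assumes "bij g" shows "(g \<circ> e)(v := z) = g \<circ> e(v := inv g z)"
  using assms by (auto simp: fun_eq_iff bij_is_surj surj_f_inv_f)

lemma sat_automorphism:
  assumes A: "is_automorphism n sp ss"
  shows "sat n (sp \<circ> ep) (ss \<circ> es) \<phi> \<longleftrightarrow> sat n ep es \<phi>"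
proof (induction \<phi> arbitrary: ep es)
  case (EqP t u)
  have "inj sp" using A unfolding is_automorphism_def bij_def by blast
  then show ?case by (simp only: sat.simps evaluation_automorphism[OF A]) (simp add: inj_eq)
next
  case (EqS s t)
  have "inj ss" using A unfolding is_automorphism_def bij_def by blast
  then show ?case by (simp only: sat.simps evaluation_automorphism[OF A]) (simp add: inj_eq)
next
  case (Rel xs)
  have "map (evs (sp \<circ> ep) (ss \<circ> es)) xs = map ss (map (evs ep es) xs)"
    by (simp add: evaluation_automorphism[OF A])
  then show ?case using A unfolding is_automorphism_def by (simp only: sat.simps)
next
  case (ExistsP v \<phi>)
  have b: "bij sp" using A unfolding is_automorphism_def by blast
  show ?case
  proof
    assume "sat n (sp \<circ> ep) (ss \<circ> es) (ExistsP v \<phi>)"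
    then obtain z where "sat n ((sp \<circ> ep)(v := z)) (ss \<circ> es) \<phi>" by auto
    then have "sat n (ep(v := inv sp z)) es \<phi>" using ExistsP.IH fun_upd_comp_bij[OF b] by metis
    then show "sat n ep es (ExistsP v \<phi>)" by auto
  next
    assume "sat n ep es (ExistsP v \<phi>)"
    then obtain z where "sat n (ep(v := z)) es \<phi>" by auto
    moreover have "(sp \<circ> ep)(v := sp z) = sp \<circ> ep(v := z)" by (simp add: fun_eq_iff)
    ultimately have "sat n ((sp \<circ> ep)(v := sp z)) (ss \<circ> es) \<phi>" using ExistsP.IH by metis
    then show "sat n (sp \<circ> ep) (ss \<circ> es) (ExistsP v \<phi>)" by auto
  qed
next
  case (ExistsS v \<phi>)
  have b: "bij ss" using A unfolding is_automorphism_def by blast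
  show ?case
  proof
    assume "sat n (sp \<circ> ep) (ss \<circ> es) (ExistsS v \<phi>)"
    then obtain z where "sat n (sp \<circ> ep) ((ss \<circ> es)(v := z)) \<phi>" by auto
    then have "sat n ep (es(v := inv ss z)) \<phi>" using ExistsS.IH fun_upd_comp_bij[OF b] by metis
    then show "sat n ep es (ExistsS v \<phi>)" by (simp only: sat.simps) blast
  next
    assume "sat n ep es (ExistsS v \<phi>)"
    then obtain z where "sat n ep (es(v := z)) \<phi>" by auto
    moreover have "(ss \<circ> es)(v := ss z) = ss \<circ> es(v := z)" by (simp add: fun_eq_iff)
    ultimately have "sat n (sp \<circ> ep) ((ss \<circ> es)(v := ss z)) \<phi>" using ExistsS.IH by metis
    then show "sat n (sp \<circ> ep) (ss \<circ> es) (ExistsS v \<phi>)" by (simp only: sat.simps) blast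
  qed
qed simp_all

lemma automorphism_S_zero:
  assumes "is_automorphism n sp ss" shows "ss (0, 0) = (0, 0)"
proof -
  have "ss (0, 0) = (fst (ss (0, 0)) + fst (ss (0, 0)), snd (ss (0, 0)) + snd (ss (0, 0)))"
    using assms unfolding is_automorphism_def by (metis add_0 fst_conv snd_conv)
  then show ?thesis by (metis add_cancel_left_left prod.collapse prod.inject)
qed

lemma comp_lenv: "f d = d' \<Longrightarrow> f \<circ> lenv d xs = lenv d' (map f xs)"
  by (auto simp: lenv_def fun_eq_iff)

lemma defines_with_automorphism:
  assumes A: "is_automorphism n sp ss" and dw: "defines_with n k l \<phi> cp cs F"
  shows "defines_with n k l \<phi> (map sp cp) (map ss cs) (map_prod (map sp) (map ss) ` F)"
  unfolding defines_with_def
proof (intro allI impI)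
  fix a :: "complex list" and b :: "(complex \<times> complex) list" assume len: "length a = k \<and> length b = l"
  have bp: "bij sp" and bs: "bij ss" using A unfolding is_automorphism_def by auto
  define a' b' where "a' = map (inv sp) a" and "b' = map (inv ss) b"
  have ma: "map sp a' = a" and mb: "map ss b' = b"
    unfolding a'_def b'_def using bp bs by (simp_all add: map_idI bij_is_surj surj_f_inv_f)
  have "inj (map_prod (map sp) (map ss))"
  proof (rule injI)
    fix x y assume "map_prod (map sp) (map ss) x = map_prod (map sp) (map ss) y"
    then show "x = y" using bp bs unfolding bij_def by (cases x, cases y) (simp add: inj_map_eq_map)
  qed
  then have "(a, b) \<in> map_prod (map sp) (map ss) ` F \<longleftrightarrow> (a', b') \<in> F"
    using ma mb by (metis inj_image_mem_iff map_prod_simp)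
  also have "\<dots> \<longleftrightarrow> sat n (lenv 0 (a' @ cp)) (lenv (0, 0) (b' @ cs)) \<phi>"
    using dw len unfolding defines_with_def a'_def b'_def by simp
  also have "\<dots> \<longleftrightarrow> sat n (sp \<circ> lenv 0 (a' @ cp)) (ss \<circ> lenv (0, 0) (b' @ cs)) \<phi>"
    using sat_automorphism[OF A] by simp
  also have "\<dots> \<longleftrightarrow> sat n (lenv 0 (a @ map sp cp)) (lenv (0, 0) (b @ map ss cs)) \<phi>"
    using comp_lenv[of sp 0 0] comp_lenv[of ss "(0, 0)" "(0, 0)"] A automorphism_S_zero[OF A] ma mb
    unfolding is_automorphism_def by simp
  finally show "(a, b) \<in> map_prod (map sp) (map ss) ` F
      \<longleftrightarrow> sat n (lenv 0 (a @ map sp cp)) (lenv (0, 0) (b @ map ss cs)) \<phi>" .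
qed

lemma map_eq_self_iff: "map f xs = xs \<longleftrightarrow> (\<forall>x\<in>set xs. f x = x)"
  by (induction xs) auto

lemma automorphism_fixes_code:
  assumes code: "is_code n k l F cp cs" and A: "is_automorphism n sp ss"
    and F: "map_prod (map sp) (map ss) ` F = F"
  shows "map sp cp = cp \<and> map ss cs = cs"
proof -
  obtain \<phi> where dw: "defines_with n k l \<phi> cp cs F"
    and uniq: "\<And>cp' cs'. length cp' = length cp \<Longrightarrow> length cs' = length cs \<Longrightarrow>
      defines_with n k l \<phi> cp' cs' F \<Longrightarrow> cp' = cp \<and> cs' = cs"
    using code unfolding is_code_def by blast
  show ?thesis using uniq[OF length_map length_map] defines_with_automorphism[OF A dw] F by simp
qed

lemma automorphism_fixing_code_fixes:
  assumes code: "is_code n k l F cp cs" and shape: "\<forall>(a, b)\<in>F. length a = k \<and> length b = l"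
    and A: "is_automorphism n sp ss" and fixed: "map sp cp = cp" "map ss cs = cs"
  shows "map_prod (map sp) (map ss) ` F = F"
proof -
  obtain \<phi> where dw: "defines_with n k l \<phi> cp cs F" using code unfolding is_code_def by blast
  have dw': "defines_with n k l \<phi> cp cs (map_prod (map sp) (map ss) ` F)"
    using defines_with_automorphism[OF A dw] fixed by simp
  have shape': "length a = k \<and> length b = l" if "(a, b) \<in> map_prod (map sp) (map ss) ` F" for a b
    using that shape by auto
  show ?thesis
  proof (intro set_eqI iffI)
    fix p assume p: "p \<in> map_prod (map sp) (map ss) ` F"
    then show "p \<in> F" using dw dw' shape'[of "fst p" "snd p"] unfolding defines_with_def by (cases p) simp
  next
    fix p assume "p \<in> F"
    then show "p \<in> map_prod (map sp) (map ss) ` F"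
      using dw dw' shape unfolding defines_with_def by (cases p) auto
  qed
qed

lemma Rn_iff_powers:
  "Rn n xs \<longleftrightarrow> length xs = Suc n \<and> (\<forall>j\<le>n. fst (xs ! j) = fst (xs ! 0) ^ Suc j) \<and>
     snd (xs ! n) = (\<Sum>i=1..n. of_nat (Suc n choose i) * (-1) ^ (n - i) * fst (xs ! 0) ^ (Suc n - i) * snd (xs ! (i - 1)))"
  (is "_ \<longleftrightarrow> ?rhs")
proof -
  have pow: "(\<forall>i\<in>{1..Suc n}. fst (xs ! (i - 1)) = fst (xs ! 0) ^ i) \<longleftrightarrow> (\<forall>j\<le>n. fst (xs ! j) = fst (xs ! 0) ^ Suc j)"
  proof safe
    fix j assume hyp: "\<forall>i\<in>{1..Suc n}. fst (xs ! (i - 1)) = fst (xs ! 0) ^ i" and "j \<le> n"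
    then have "fst (xs ! (Suc j - 1)) = fst (xs ! 0) ^ Suc j" by (intro hyp[rule_format]) simp
    then show "fst (xs ! j) = fst (xs ! 0) ^ Suc j" by simp
  next
    fix i assume hyp: "\<forall>j\<le>n. fst (xs ! j) = fst (xs ! 0) ^ Suc j" and "i \<in> {1..Suc n}"
    then have "fst (xs ! (i - 1)) = fst (xs ! 0) ^ Suc (i - 1)" by (intro hyp[rule_format]) auto
    moreover have "Suc (i - 1) = i" using \<open>i \<in> {1..Suc n}\<close> by simp
    ultimately show "fst (xs ! (i - 1)) = fst (xs ! 0) ^ i" by (simp only:)
  qed
  have sums: "(\<Sum>i=1..n. of_nat (Suc n choose i) * (-1) ^ (n - i) * fst (xs ! (n - i)) * snd (xs ! (i - 1)))
      = (\<Sum>i=1..n. of_nat (Suc n choose i) * (-1) ^ (n - i) * fst (xs ! 0) ^ (Suc n - i) * snd (xs ! (i - 1)))"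
    if hyp: "\<forall>j\<le>n. fst (xs ! j) = fst (xs ! 0) ^ Suc j"
  proof (rule sum.cong[OF refl])
    fix i assume "i \<in> {1..n}"
    then have "fst (xs ! (n - i)) = fst (xs ! 0) ^ Suc (n - i)" "Suc (n - i) = Suc n - i"
      using hyp[rule_format, of "n - i"] by auto
    then show "of_nat (Suc n choose i) * (-1) ^ (n - i) * fst (xs ! (n - i)) * snd (xs ! (i - 1))
      = of_nat (Suc n choose i) * (-1) ^ (n - i) * fst (xs ! 0) ^ (Suc n - i) * snd (xs ! (i - 1))" by simp
  qed
  show ?thesis
  proof (cases "\<forall>j\<le>n. fst (xs ! j) = fst (xs ! 0) ^ Suc j")
    case True
    show ?thesis unfolding Rn_def pow sums[OF True] ..
  next
    case False
    then show ?thesis unfolding Rn_def pow by blast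
  qed
qed

definition Rn_compatible :: "nat \<Rightarrow> (complex \<Rightarrow> complex) \<Rightarrow> bool" where
  "Rn_compatible n f \<longleftrightarrow> (\<forall>x. f (x ^ Suc n)
     = (\<Sum>i=1..n. of_nat (Suc n choose i) * (-1) ^ (n - i) * x ^ (Suc n - i) * f (x ^ i)))"

definition shift_by :: "(complex \<Rightarrow> complex) \<Rightarrow> complex \<times> complex \<Rightarrow> complex \<times> complex" where
  "shift_by f s = (fst s, snd s + f (fst s))"

lemma fst_shift_by [simp]: "fst (shift_by f s) = fst s"
  and snd_shift_by [simp]: "snd (shift_by f s) = snd s + f (fst s)"
  by (simp_all add: shift_by_def)

lemma Rn_map_shift_by:
  assumes comp: "Rn_compatible n f"
  shows "Rn n (map (shift_by f) xs) \<longleftrightarrow> Rn n xs"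
proof -
  define x c where "x = fst (xs ! 0)" and "c i = (of_nat (Suc n choose i) * (-1) ^ (n - i) :: complex)" for i
  have fst_shift: "fst (map (shift_by f) xs ! j) = fst (xs ! j)" if "j < length xs" for j
    using that by simp
  have same_powers: "(\<forall>j\<le>n. fst (map (shift_by f) xs ! j) = fst (map (shift_by f) xs ! 0) ^ Suc j)
      \<longleftrightarrow> (\<forall>j\<le>n. fst (xs ! j) = fst (xs ! 0) ^ Suc j)" if "length xs = Suc n"
    using that by simp
  show ?thesis
  proof (cases "length xs = Suc n \<and> (\<forall>j\<le>n. fst (xs ! j) = x ^ Suc j)")
    case False
    then have "\<not> (length xs = Suc n \<and> (\<forall>j\<le>n. fst (map (shift_by f) xs ! j) = fst (map (shift_by f) xs ! 0) ^ Suc j))"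
      using same_powers unfolding x_def by blast
    then show ?thesis using False unfolding Rn_iff_powers length_map x_def by blast
  next
    case True
    then have len: "length xs = Suc n" and pow: "\<And>j. j \<le> n \<Longrightarrow> fst (xs ! j) = x ^ Suc j" by auto
    have pow': "\<forall>j\<le>n. fst (map (shift_by f) xs ! j) = fst (map (shift_by f) xs ! 0) ^ Suc j"
      using same_powers[OF len] True unfolding x_def by blast
    have fst0: "fst (map (shift_by f) xs ! 0) = x" using fst_shift[of 0] len unfolding x_def by simp
    have snd_shift: "snd (map (shift_by f) xs ! j) = snd (xs ! j) + f (x ^ Suc j)" if "j \<le> n" for j
      using that len pow[OF that] by simp
    have "(\<Sum>i=1..n. c i * x ^ (Suc n - i) * snd (map (shift_by f) xs ! (i - 1)))
        = (\<Sum>i=1..n. c i * x ^ (Suc n - i) * snd (xs ! (i - 1))) + (\<Sum>i=1..n. c i * x ^ (Suc n - i) * f (x ^ i))"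
      unfolding sum.distrib[symmetric]
    proof (rule sum.cong[OF refl])
      fix i assume "i \<in> {1..n}"
      then have "i - 1 \<le> n" "Suc (i - 1) = i" by auto
      then show "c i * x ^ (Suc n - i) * snd (map (shift_by f) xs ! (i - 1))
          = c i * x ^ (Suc n - i) * snd (xs ! (i - 1)) + c i * x ^ (Suc n - i) * f (x ^ i)"
        using snd_shift[of "i - 1"] by (simp add: algebra_simps)
    qed
    moreover have "f (x ^ Suc n) = (\<Sum>i=1..n. c i * x ^ (Suc n - i) * f (x ^ i))"
      using comp unfolding Rn_compatible_def c_def by blast
    ultimately have "snd (map (shift_by f) xs ! n) = (\<Sum>i=1..n. c i * x ^ (Suc n - i) * snd (map (shift_by f) xs ! (i - 1)))
        \<longleftrightarrow> snd (xs ! n) = (\<Sum>i=1..n. c i * x ^ (Suc n - i) * snd (xs ! (i - 1)))"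
      using snd_shift[of n] by simp
    then show ?thesis using len pow' True
      unfolding Rn_iff_powers length_map fst0 c_def[symmetric] x_def[symmetric] by blast
  qed
qed

lemma is_automorphism_shift_by:
  assumes add: "\<And>a b. f (a + b) = f a + f b" and comp: "Rn_compatible n f"
  shows "is_automorphism n id (shift_by f)"
proof -
  have "shift_by f (fst s, snd s - f (fst s)) = s" for s by (simp add: shift_by_def)
  then have "surj (shift_by f)" by (rule surjI)
  moreover have "inj (shift_by f)" by (rule injI) (auto simp: shift_by_def prod_eq_iff)
  ultimately show ?thesis
    unfolding is_automorphism_def using Rn_map_shift_by[OF comp] add
    by (simp add: bij_def) (simp add: shift_by_def)
qed

lemma Rn_map_field_aut:
  assumes \<tau>: "field_emb UNIV \<tau>"
  shows "Rn n (map (map_prod \<tau> \<tau>) xs) \<longleftrightarrow> Rn n xs"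
proof (cases "length xs = Suc n")
  case True
  have inj: "inj \<tau>" using field_emb_inj_on[OF \<tau>] .
  define c where "c i = (of_nat (Suc n choose i) * (-1) ^ (n - i) :: complex)" for i
  have \<tau>_term: "\<tau> (c i * x ^ k * y) = c i * \<tau> x ^ k * \<tau> y" for i k x y
    by (simp add: field_emb_UNIV[OF \<tau>] c_def)
  have \<tau>_sum: "\<tau> (\<Sum>i=1..n. c i * x ^ (Suc n - i) * y i) = (\<Sum>i=1..n. c i * \<tau> x ^ (Suc n - i) * \<tau> (y i))" for x y
    by (subst additive_on_sum[OF subfield_UNIV field_emb_additive[OF \<tau>]]) (simp_all add: \<tau>_term)
  have powers: "(\<forall>j\<le>n. \<tau> (fst (xs ! j)) = \<tau> (fst (xs ! 0)) ^ Suc j) \<longleftrightarrow> (\<forall>j\<le>n. fst (xs ! j) = fst (xs ! 0) ^ Suc j)"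
    by (simp only: field_emb_UNIV(6)[OF \<tau>, symmetric] inj_eq[OF inj])
  have "\<tau> (snd (xs ! n)) = (\<Sum>i=1..n. c i * \<tau> (fst (xs ! 0)) ^ (Suc n - i) * \<tau> (snd (xs ! (i - 1))))
      \<longleftrightarrow> snd (xs ! n) = (\<Sum>i=1..n. c i * fst (xs ! 0) ^ (Suc n - i) * snd (xs ! (i - 1)))"
    by (simp only: \<tau>_sum[symmetric] inj_eq[OF inj])
  moreover have nth: "fst (map (map_prod \<tau> \<tau>) xs ! j) = \<tau> (fst (xs ! j))"
      "snd (map (map_prod \<tau> \<tau>) xs ! j) = \<tau> (snd (xs ! j))" if "j \<le> n" for j
    using that True by (simp_all add: map_prod_def split_beta)
  moreover have "(\<Sum>i=1..n. c i * \<tau> (fst (xs ! 0)) ^ (Suc n - i) * snd (map (map_prod \<tau> \<tau>) xs ! (i - 1)))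
      = (\<Sum>i=1..n. c i * \<tau> (fst (xs ! 0)) ^ (Suc n - i) * \<tau> (snd (xs ! (i - 1))))"
  proof (rule sum.cong[OF refl])
    fix i assume "i \<in> {1..n}"
    then have "i - 1 \<le> n" by auto
    then show "c i * \<tau> (fst (xs ! 0)) ^ (Suc n - i) * snd (map (map_prod \<tau> \<tau>) xs ! (i - 1))
        = c i * \<tau> (fst (xs ! 0)) ^ (Suc n - i) * \<tau> (snd (xs ! (i - 1)))" using nth(2) by simp
  qed
  ultimately show ?thesis using True powers unfolding Rn_iff_powers c_def[symmetric] length_map
    by (simp add: nth)
qed (simp add: Rn_def)

lemma is_automorphism_field_aut:
  assumes \<tau>: "field_emb UNIV \<tau>" "surj \<tau>"
  shows "is_automorphism n \<tau> (map_prod \<tau> \<tau>)"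
proof -
  have "bij \<tau>" using field_emb_inj_on[OF \<tau>(1)] \<tau>(2) by (simp add: bij_def)
  then have "bij (map_prod \<tau> \<tau>)"
    unfolding bij_def inj_def surj_def by (metis map_prod_simp prod.inject surj_pair)
  then show ?thesis
    unfolding is_automorphism_def using \<open>bij \<tau>\<close> Rn_map_field_aut[OF \<tau>(1)]
    by (simp add: field_emb_UNIV[OF \<tau>(1)] map_prod_def split_beta)
qed

text \<open>The coefficients of \<open>R\<^sub>n\<close> come from the vanishing of \<open>m\<close>-th finite differences
  \<open>\<Sum>i\<le>m. (-1)\<^bsup>m-i\<^esup> (m choose i) p(i)\<close> of polynomials \<open>p\<close> of degree \<open>< m\<close>; degrees \<open>\<le> 2\<close> suffice here.\<close>

lemma sum_atMost_Suc_ends: "(\<Sum>i\<le>Suc n. f i) = f 0 + (\<Sum>i=1..n. f i) + f (Suc n)"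
proof -
  have "{..n} = insert 0 {1..n}" by auto
  hence "(\<Sum>i\<le>n. f i) = f 0 + (\<Sum>i=1..n. f i)" by (simp add: sum.insert)
  thus ?thesis by (simp add: sum.atMost_Suc)
qed

lemma alternating_choose_sum: "1 \<le> m \<Longrightarrow> (\<Sum>i\<le>m. (-1::'a::comm_ring_1)^(m-i) * of_nat (m choose i)) = 0"
  using binomial_ring[of "1::'a::comm_ring_1" "-1" m] by (simp add: mult.commute power_0_left)

lemma alternating_choose_index_shift: "(\<Sum>i\<le>Suc m. (-1::'a::comm_ring_1)^(Suc m-i) * of_nat (Suc m choose i) * of_nat i)
   = of_nat (Suc m) * (\<Sum>j\<le>m. (-1::'a::comm_ring_1)^(m-j) * of_nat (m choose j))"
proof -
  have "(\<Sum>i\<le>Suc m. (-1::'a::comm_ring_1)^(Suc m-i) * of_nat (Suc m choose i) * of_nat i)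
     = (\<Sum>j\<le>m. (-1::'a::comm_ring_1)^(m-j) * of_nat (Suc m choose Suc j) * of_nat (Suc j))"
    by (subst sum.atMost_Suc_shift) (simp del: binomial_Suc_Suc)
  also have "\<dots> = (\<Sum>j\<le>m. (-1::'a::comm_ring_1)^(m-j) * (of_nat (Suc m) * of_nat (m choose j)))"
  proof (rule sum.cong[OF refl])
    fix j
    have "of_nat (Suc m choose Suc j) * of_nat (Suc j) = (of_nat (Suc m) * of_nat (m choose j) :: 'a::comm_ring_1)"
      using Suc_times_binomial_eq[of m j] by (metis of_nat_mult)
    then show "(-1::'a::comm_ring_1)^(m-j) * of_nat (Suc m choose Suc j) * of_nat (Suc j) = (-1::'a::comm_ring_1)^(m-j) * (of_nat (Suc m) * of_nat (m choose j))"
      by (simp add: mult.assoc)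
  qed
  also have "\<dots> = of_nat (Suc m) * (\<Sum>j\<le>m. (-1::'a::comm_ring_1)^(m-j) * of_nat (m choose j))"
    by (simp add: sum_distrib_left algebra_simps)
  finally show ?thesis .
qed

lemma alternating_choose_index2_shift: "(\<Sum>i\<le>Suc m. (-1::'a::comm_ring_1)^(Suc m-i) * of_nat (Suc m choose i) * (of_nat i * of_nat (i - 1)))
   = of_nat (Suc m) * (\<Sum>j\<le>m. (-1::'a::comm_ring_1)^(m-j) * of_nat (m choose j) * of_nat j)"
proof -
  have "(\<Sum>i\<le>Suc m. (-1::'a::comm_ring_1)^(Suc m-i) * of_nat (Suc m choose i) * (of_nat i * of_nat (i - 1)))
     = (\<Sum>j\<le>m. (-1::'a::comm_ring_1)^(m-j) * of_nat (Suc m choose Suc j) * (of_nat (Suc j) * of_nat j))"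
    by (subst sum.atMost_Suc_shift) (simp del: binomial_Suc_Suc)
  also have "\<dots> = (\<Sum>j\<le>m. of_nat (Suc m) * ((-1::'a::comm_ring_1)^(m-j) * of_nat (m choose j) * of_nat j))"
  proof (rule sum.cong[OF refl])
    fix j
    have "of_nat (Suc m choose Suc j) * of_nat (Suc j) = (of_nat (Suc m) * of_nat (m choose j) :: 'a::comm_ring_1)"
      using Suc_times_binomial_eq[of m j] by (metis of_nat_mult)
    then show "(-1::'a::comm_ring_1)^(m-j) * of_nat (Suc m choose Suc j) * (of_nat (Suc j) * of_nat j) = of_nat (Suc m) * ((-1::'a::comm_ring_1)^(m-j) * of_nat (m choose j) * of_nat j)"
      by (metis (no_types, lifting) mult.assoc mult.left_commute)
  qed
  also have "\<dots> = of_nat (Suc m) * (\<Sum>j\<le>m. (-1::'a::comm_ring_1)^(m-j) * of_nat (m choose j) * of_nat j)"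
    by (simp add: sum_distrib_left)
  finally show ?thesis .
qed

lemma alternating_choose_index_sum: assumes "2 \<le> m" shows "(\<Sum>i\<le>m. (-1::'a::comm_ring_1)^(m-i) * of_nat (m choose i) * of_nat i) = 0"
proof -
  obtain m' where m: "m = Suc m'" "1 \<le> m'" using assms by (cases m) auto
  show ?thesis unfolding m(1) alternating_choose_index_shift using alternating_choose_sum[OF m(2), where 'a = 'a] by simp
qed

lemma alternating_choose_index2_sum: assumes "3 \<le> m" shows "(\<Sum>i\<le>m. (-1::'a::comm_ring_1)^(m-i) * of_nat (m choose i) * (of_nat i * of_nat (i - 1))) = 0"
proof -
  obtain m' where m: "m = Suc m'" "2 \<le> m'" using assms by (cases m) auto
  show ?thesis unfolding m(1) alternating_choose_index2_shift using alternating_choose_index_sum[OF m(2), where 'a = 'a] by simp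
qed

lemma Rn_coefficients_index_sum: assumes "1 \<le> n"
  shows "(\<Sum>i=1..n. of_nat (Suc n choose i) * (-1)^(n-i) * of_nat i) = (of_nat (Suc n) :: 'a::comm_ring_1)"
proof -
  have "0 = (\<Sum>i\<le>Suc n. (-1::'a::comm_ring_1)^(Suc n-i) * of_nat (Suc n choose i) * of_nat i)"
    using alternating_choose_index_sum[of "Suc n"] assms by simp
  also have "\<dots> = (\<Sum>i=1..n. (-1::'a::comm_ring_1)^(Suc n-i) * of_nat (Suc n choose i) * of_nat i) + of_nat (Suc n)"
    unfolding sum_atMost_Suc_ends by simp
  also have "(\<Sum>i=1..n. (-1::'a::comm_ring_1)^(Suc n-i) * of_nat (Suc n choose i) * of_nat i)
      = - (\<Sum>i=1..n. of_nat (Suc n choose i) * (-1)^(n-i) * of_nat i)"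
    by (simp add: sum_negf[symmetric] Suc_diff_le mult_ac) 
  finally show ?thesis by (simp add: eq_neg_iff_add_eq_0 add.commute)
qed

lemma Rn_coefficients_index2_sum: assumes "2 \<le> n"
  shows "(\<Sum>i=1..n. of_nat (Suc n choose i) * (-1)^(n-i) * (of_nat i * of_nat (i - 1))) = (of_nat (Suc n) * of_nat n :: 'a::comm_ring_1)"
proof -
  have "0 = (\<Sum>i\<le>Suc n. (-1::'a::comm_ring_1)^(Suc n-i) * of_nat (Suc n choose i) * (of_nat i * of_nat (i - 1)))"
    using alternating_choose_index2_sum[of "Suc n"] assms by simp
  also have "\<dots> = (\<Sum>i=1..n. (-1::'a::comm_ring_1)^(Suc n-i) * of_nat (Suc n choose i) * (of_nat i * of_nat (i - 1))) + of_nat (Suc n) * of_nat n"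
    unfolding sum_atMost_Suc_ends by simp
  also have "(\<Sum>i=1..n. (-1::'a::comm_ring_1)^(Suc n-i) * of_nat (Suc n choose i) * (of_nat i * of_nat (i - 1)))
      = - (\<Sum>i=1..n. of_nat (Suc n choose i) * (-1)^(n-i) * (of_nat i * of_nat (i - 1)))"
    by (simp add: sum_negf[symmetric] Suc_diff_le mult_ac)
  finally show ?thesis by (simp add: eq_neg_iff_add_eq_0 add.commute)
qed



text \<open>Second-order differential operators, such as \<open>D\<close> and \<open>D \<circ> D\<close> for a derivation \<open>D\<close>;
  the bound \<open>n \<ge> 2\<close> is where the proposition needs \<open>n > 1\<close>.\<close>

lemma Rn_compatible_second_order:
  assumes f: "\<And>x i. f (x ^ i) = A x * of_nat i * x ^ (i - 1) + B x * (of_nat i * of_nat (i - 1)) * x ^ (i - 2)"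
    and n: "2 \<le> n"
  shows "Rn_compatible n f"
  unfolding Rn_compatible_def
proof
  fix x
  define c where "c i = (of_nat (Suc n choose i) * (-1) ^ (n - i) :: complex)" for i :: nat
  have lhs: "f (x ^ Suc n) = A x * x ^ n * of_nat (Suc n) + B x * x ^ (n - 1) * (of_nat (Suc n) * of_nat n)"
    using f[of x "Suc n"] by (simp add: algebra_simps)
  have "(\<Sum>i=1..n. of_nat (Suc n choose i) * (-1) ^ (n - i) * x ^ (Suc n - i) * f (x ^ i))
     = (\<Sum>i=1..n. A x * x ^ n * (c i * of_nat i) + B x * x ^ (n - 1) * (c i * (of_nat i * of_nat (i - 1))))"
  proof (rule sum.cong[OF refl])
    fix i assume i: "i \<in> {1..n}"
    have "(Suc n - i) + (i - 1) = n" using i by auto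
    hence e1: "x ^ (Suc n - i) * x ^ (i - 1) = x ^ n" by (metis power_add)
    have e2: "of_nat (i - 1) * (x ^ (Suc n - i) * x ^ (i - 2)) = of_nat (i - 1) * (x ^ (n - 1) :: complex)"
    proof (cases "i = 1")
      case True then show ?thesis by simp
    next
      case False
      hence "(Suc n - i) + (i - 2) = n - 1" using i by auto
      then show ?thesis by (metis power_add)
    qed
    have "of_nat (Suc n choose i) * (-1) ^ (n - i) * x ^ (Suc n - i) * f (x ^ i)
        = A x * (c i * of_nat i) * (x ^ (Suc n - i) * x ^ (i - 1))
          + B x * (c i * of_nat i) * (of_nat (i - 1) * (x ^ (Suc n - i) * x ^ (i - 2)))"
      unfolding f c_def by (simp add: algebra_simps)
    also have "\<dots> = A x * (c i * of_nat i) * x ^ n + B x * (c i * of_nat i) * (of_nat (i - 1) * x ^ (n - 1))"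
      unfolding e1 e2 ..
    also have "\<dots> = A x * x ^ n * (c i * of_nat i) + B x * x ^ (n - 1) * (c i * (of_nat i * of_nat (i - 1)))"
      by (simp add: algebra_simps)
    finally show "of_nat (Suc n choose i) * (-1) ^ (n - i) * x ^ (Suc n - i) * f (x ^ i)
        = A x * x ^ n * (c i * of_nat i) + B x * x ^ (n - 1) * (c i * (of_nat i * of_nat (i - 1)))" .
  qed
  also have "\<dots> = A x * x ^ n * (\<Sum>i=1..n. c i * of_nat i) + B x * x ^ (n - 1) * (\<Sum>i=1..n. c i * (of_nat i * of_nat (i - 1)))"
    by (simp add: sum.distrib sum_distrib_left)
  also have "(\<Sum>i=1..n. c i * of_nat i) = of_nat (Suc n)" unfolding c_def using Rn_coefficients_index_sum[of n] n by simp
  also have "(\<Sum>i=1..n. c i * (of_nat i * of_nat (i - 1))) = of_nat (Suc n) * of_nat n" unfolding c_def using Rn_coefficients_index2_sum[of n] n by simp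
  finally show "f (x ^ Suc n) = (\<Sum>i=1..n. of_nat (Suc n choose i) * (-1) ^ (n - i) * x ^ (Suc n - i) * f (x ^ i))"
    using lhs by simp
qed

lemma Rn_compatible_derivation: assumes D: "derivation_on UNIV D" and n: "2 \<le> n" shows "Rn_compatible n D"
  by (rule Rn_compatible_second_order[where A = D and B = "\<lambda>_. 0", OF _ n]) (simp add: derivation_power[OF D] algebra_simps)

lemma Rn_compatible_derivation_twice: assumes D: "derivation_on UNIV D" and n: "2 \<le> n" shows "Rn_compatible n (\<lambda>x. D (D x))"
proof (rule Rn_compatible_second_order[where A = "\<lambda>x. D (D x)" and B = "\<lambda>x. (D x)^2", OF _ n])
  fix x :: complex and i :: nat
  have "D (D (x ^ i)) = D (of_nat i * (x ^ (i - 1) * D x))" using derivation_power[OF D, of x i] by (simp add: mult.assoc)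
  also have "\<dots> = of_nat i * (x ^ (i - 1) * D (D x) + D x * D (x ^ (i - 1)))" using derivation_UNIV[OF D] by simp
  also have "\<dots> = of_nat i * (x ^ (i - 1) * D (D x) + D x * (of_nat (i - 1) * x ^ (i - 2) * D x))"
  proof -
    have "i - 1 - 1 = i - 2" by simp
    then show ?thesis using derivation_power[OF D, of x "i - 1"] by metis
  qed
  also have "\<dots> = D (D x) * of_nat i * x ^ (i - 1) + (D x)^2 * (of_nat i * of_nat (i - 1)) * x ^ (i - 2)"
    by (simp add: algebra_simps power2_eq_square)
  finally show "D (D (x ^ i)) = D (D x) * of_nat i * x ^ (i - 1) + (D x)^2 * (of_nat i * of_nat (i - 1)) * x ^ (i - 2)" .
qed

lemma aut_reflecting_derivation:
  fixes D :: "complex \<Rightarrow> complex"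
  assumes D: "derivation_on UNIV D" "D \<alpha> = 1" and C: "\<And>c. c \<in> C \<Longrightarrow> D (D c) = 0"
  obtains \<tau> where "field_emb UNIV \<tau>" "surj \<tau>" "\<tau> \<alpha> = - \<alpha>" "\<And>c. c \<in> C \<Longrightarrow> \<tau> c = c - 2 * D c * \<alpha>"
proof -
  define K where "K = subfield_generated (D ` C \<union> (\<lambda>c. c - D c * \<alpha>) ` C)"
  have "D (c - D c * \<alpha>) = 0" if "c \<in> C" for c
  proof -
    have "D (c - D c * \<alpha>) = D c - D (D c * \<alpha>)"
      using derivation_UNIV(1)[OF D(1), of c "- (D c * \<alpha>)"] derivation_UNIV(5)[OF D(1), of "D c * \<alpha>"]
      by simp
    also have "\<dots> = 0" using C[OF that] D by (simp add: derivation_UNIV(2)[OF D(1)])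
    finally show ?thesis .
  qed
  then have "D ` C \<union> (\<lambda>c. c - D c * \<alpha>) ` C \<subseteq> {x. D x = 0}" using C by auto
  then have ker: "K \<subseteq> {x. D x = 0}"
    unfolding K_def by (rule subfield_generated_minimal[OF subfield_derivation_kernel[OF D(1)]])
  have K: "subfield K" unfolding K_def by (rule subfield_subfield_generated)
  have "\<not> algebraic_over K \<alpha>"
    using derivation_vanishes_on_algebraic[OF D(1) K, of \<alpha>] ker D(2) by force
  then obtain \<tau> where \<tau>: "field_emb UNIV \<tau>" "surj \<tau>" "\<tau> \<alpha> = - \<alpha>" "\<And>x. x \<in> K \<Longrightarrow> \<tau> x = x"
    by (rule aut_negating_transcendental[OF K]) blast
  have gen: "D ` C \<union> (\<lambda>c. c - D c * \<alpha>) ` C \<subseteq> K" unfolding K_def by (rule subfield_generated_subset)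
  have "\<tau> c = c - 2 * D c * \<alpha>" if "c \<in> C" for c
  proof -
    have "\<tau> c = \<tau> (D c * \<alpha> + (c - D c * \<alpha>))" by simp
    also have "\<dots> = \<tau> (D c) * \<tau> \<alpha> + \<tau> (c - D c * \<alpha>)" by (simp only: field_emb_UNIV(1,2)[OF \<tau>(1)])
    also have "\<dots> = D c * (- \<alpha>) + (c - D c * \<alpha>)"
    proof -
      have "D c \<in> K" "c - D c * \<alpha> \<in> K" using gen that by auto
      then show ?thesis using \<tau>(3) \<tau>(4) by simp
    qed
    finally show ?thesis by simp
  qed
  then show ?thesis using that \<tau>(1-3) by blast
qed

lemma code_of_pair_shift_iff:
  assumes code: "is_code n 0 1 F cp cs" and F: "F = {([], [(\<alpha>, 0)]), ([], [(- \<alpha>, 0)])}"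
    and add: "\<And>a b. f (a + b) = f a + f b" and comp: "Rn_compatible n f"
  shows "f \<alpha> = 0 \<longleftrightarrow> (\<forall>s\<in>set cs. f (fst s) = 0)"
proof -
  have f_uminus: "f (- \<alpha>) = - f \<alpha>" using add[of \<alpha> "- \<alpha>"] add[of 0 0] by (simp add: eq_neg_iff_add_eq_0)
  have shape: "\<forall>(a, b)\<in>F. length a = 0 \<and> length b = 1" using F by simp
  note A = is_automorphism_shift_by[OF add comp]
  show ?thesis
  proof
    assume "f \<alpha> = 0"
    then have "map_prod (map id) (map (shift_by f)) ` F = F" using F f_uminus by (simp add: shift_by_def)
    then have "map (shift_by f) cs = cs" using automorphism_fixes_code[OF code A] by blast
    then show "\<forall>s\<in>set cs. f (fst s) = 0" by (auto simp: map_eq_self_iff prod_eq_iff)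
  next
    assume "\<forall>s\<in>set cs. f (fst s) = 0"
    then have "map (shift_by f) cs = cs" by (simp add: map_eq_self_iff shift_by_def)
    then have "map_prod (map id) (map (shift_by f)) ` F = F"
      using automorphism_fixing_code_fixes[OF code shape A] by simp
    moreover have "([], [(\<alpha>, f \<alpha>)]) \<in> map_prod (map id) (map (shift_by f)) ` F"
      using F by (simp add: shift_by_def)
    ultimately show "f \<alpha> = 0" using F by auto
  qed
qed

lemma code_of_pair_fixed_by_negation:
  assumes code: "is_code n 0 1 F cp cs" and F: "F = {([], [(\<alpha>, 0)]), ([], [(- \<alpha>, 0)])}"
    and \<tau>: "field_emb UNIV \<tau>" "surj \<tau>" "\<tau> \<alpha> = - \<alpha>" and s: "s \<in> set cs"
  shows "\<tau> (fst s) = fst s"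
proof -
  have "map_prod (map \<tau>) (map (map_prod \<tau> \<tau>)) ` F = F"
    using F \<tau>(3) by (simp add: field_emb_UNIV[OF \<tau>(1)] insert_commute)
  then have "map (map_prod \<tau> \<tau>) cs = cs"
    using automorphism_fixes_code[OF code is_automorphism_field_aut[OF \<tau>(1,2)]] by blast
  then show ?thesis using s unfolding map_eq_self_iff by (cases s) auto
qed

theorem proposition4p6:
  fixes n :: nat
  assumes "n > 1"
  shows "\<not> elim_finite_imaginaries n"
proof
  assume "elim_finite_imaginaries n"
  obtain \<alpha> :: complex where \<alpha>: "\<not> algebraic_over \<rat> \<alpha>" using exists_transcendental_over_Rats by blast
  then have "\<alpha> \<noteq> 0" using algebraic_over_self[OF subfield_Rats Rats_0] by auto
  obtain D where D: "derivation_on UNIV D" "D \<alpha> = 1" using derivation_sending_to_one[OF subfield_Rats \<alpha>] by blast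
  define F :: "(complex list \<times> (complex \<times> complex) list) set"
    where "F = {([], [(\<alpha>, 0)]), ([], [(- \<alpha>, 0)])}"
  have "finite F" "\<forall>(a, b)\<in>F. length a = 0 \<and> length b = 1" unfolding F_def by auto
  then obtain cp cs where code: "is_code n 0 1 F cp cs"
    using \<open>elim_finite_imaginaries n\<close> unfolding elim_finite_imaginaries_def by blast
  have n: "2 \<le> n" using assms by simp
  note iff = code_of_pair_shift_iff[OF code F_def]
  have "D (D (fst s)) = 0" if "s \<in> set cs" for s
    using iff[of "\<lambda>x. D (D x)"] Rn_compatible_derivation_twice[OF D(1) n] D that
    by (simp add: derivation_UNIV[OF D(1)])
  then obtain \<tau> where \<tau>: "field_emb UNIV \<tau>" "surj \<tau>" "\<tau> \<alpha> = - \<alpha>"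
    "\<And>c. c \<in> fst ` set cs \<Longrightarrow> \<tau> c = c - 2 * D c * \<alpha>"
    using aut_reflecting_derivation[OF D, of "fst ` set cs"] by blast
  have "D (fst s) = 0" if "s \<in> set cs" for s
    using code_of_pair_fixed_by_negation[OF code F_def \<tau>(1-3) that] \<tau>(4)[of "fst s"] that \<open>\<alpha> \<noteq> 0\<close> by simp
  then have "D \<alpha> = 0"
    using iff[of D] Rn_compatible_derivation[OF D(1) n] by (simp add: derivation_UNIV[OF D(1)])
  then show False using D(2) by simp
qed

end
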